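(* Let $\alpha>0$ and let $(u_h,\lambda_h)\in V_h\times Q_h$ satisfy $\mathcal B_h(u_h,\lambda_h;v_h,\mu_h)=\mathcal L(v_h)$ for all $(v_h,\mu_h)\in V_h\times Q_h$. Then on $\Gamma$ $$\lambda_h=\Big\{\!\!\Big\{k\frac{\partial u_h}{\partial n}\Big\}\!\!\Big\}-\beta[\![u_h]\!],$$ and $u_h$ satisfies $a_h(u_h,v_h)=\mathcal L(v_h)$ for all $v_h\in V_h$, where $a_h(w,v)=\sum_{i=1}^2(k_i\nabla w_i,\nabla v_i)_{\Omega_i}+b_h(w,v)$ with $$b_h(w,v)=\sum_{E\in\mathcal G_h^\cap}\Big\{(\beta[\![w]\!],[\![v]\!])_E-\Big(\gamma\Big[\!\!\Big[k\frac{\partial w}{\partial n}\Big]\!\!\Big],\Big[\!\!\Big[k\frac{\partial v}{\partial n}\Big]\!\!\Big]\Big)_E-\Big(\Big\{\!\!\Big\{k\frac{\partial w}{\partial n}\Big\}\!\!\Big\},[\![v]\!]\Big)_E-\Big([\![w]\!],\Big\{\!\!\Big\{k\frac{\partial v}{\partial n}\Big\}\!\!\Big\}\Big)_E\Big\}.$$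
   Context: Setting: $\Omega\subset\mathbb R^d$, $d\in\{2,3\}$, polygonal/polyhedral, split into non-overlapping polygonal/polyhedral $\Omega_1,\Omega_2$ with interface $\Gamma=\partial\Omega_1\cap\partial\Omega_2$; $k_1\ge k_2>0$ constants; $f\in L^2(\Omega)$; $n$ is the unit normal on $\Gamma$ pointing out of $\Omega_1$, $\partial w_i/\partial n=\nabla w_i\cdot n$. $V_i=\{v\in H^1(\Omega_i):v=0\text{ on }\partial\Omega_i\setminus\Gamma\}$, $Q=(H^{1/2}_{00}(\Gamma))'$ with duality pairing $\langle\cdot,\cdot\rangle$; $[\![w]\!]=(w_1-w_2)|_\Gamma$. $\mathcal B(w,\xi;v,\mu)=\sum_{i=1}^2(k_i\nabla w_i,\nabla v_i)_{\Omega_i}-\langle[\![w]\!],\mu\rangle-\langle[\![v]\!],\xi\rangle$, $\mathcal L(v)=\sum_{i=1}^2(f,v_i)_{\Omega_i}$. Each $\Omega_i$ has a simplicial mesh $\mathcal C_h^i$, $\mathcal G_h^i$ its edges/facets on $\Gamma$, $h_E=\operatorname{diam}E$; $h_i:\Gamma\to\mathbb R$ is defined by $h_i|_E=h_E$ for $E\in\mathcal G_h^i$. $\mathcal G_h^\cap$ is the mesh of all nonempty intersections $E_1\cap E_2$, $(E_1,E_2)\in\mathcal G_h^1\times\mathcal G_h^2$. For $p\ge1$: $V_{i,h}=\{v\in V_i:v|_K\in P_p(K)\ \forall K\in\mathcal C_h^i\}$, $V_h=V_{1,h}\times V_{2,h}$, $Q_h=\{\mu\in Q:\mu|_E\in P_p(E)\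 \forall E\in\mathcal G_h^\cap\}$. Method I: $\mathcal S(w,\xi;v,\mu)=\sum_{i=1}^2\sum_{E\in\mathcal G_h^i}\frac{h_E}{k_i}(\xi-k_i\frac{\partial w_i}{\partial n},\mu-k_i\frac{\partial v_i}{\partial n})_E$, $\mathcal B_h=\mathcal B-\alpha\mathcal S$. Further, $\beta=\frac{\alpha^{-1}k_1k_2}{k_2h_1+k_1h_2}$, $\gamma=\frac{\alpha h_1h_2}{k_2h_1+k_1h_2}$, $\{\!\{k\frac{\partial w}{\partial n}\}\!\}=\frac{k_2h_1}{k_2h_1+k_1h_2}k_1\frac{\partial w_1}{\partial n}+\frac{k_1h_2}{k_2h_1+k_1h_2}k_2\frac{\partial w_2}{\partial n}$, and $[\![k\frac{\partial w}{\partial n}]\!]=k_1\frac{\partial w_1}{\partial n}-k_2\frac{\partial w_2}{\partial n}$. *)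

theory Defs
  imports "HOL-Analysis.Analysis"
begin

type_synonym 'd pt = "real^'d"

definition poly_fun :: "nat \<Rightarrow> ('d::finite pt \<Rightarrow> real) \<Rightarrow> bool" where
  "poly_fun p q \<longleftrightarrow> (\<exists>c :: ('d \<Rightarrow> nat) \<Rightarrow> real.
      q = (\<lambda>x. \<Sum>a\<in>{a::'d \<Rightarrow> nat. sum a UNIV \<le> p}. c a * (\<Prod>i\<in>UNIV. (x $ i) ^ a i)))"

definition conforming_mesh :: "'d::finite pt set set \<Rightarrow> bool" where
  "conforming_mesh C \<longleftrightarrow> finite C \<and> C \<noteq> {} \<and>
     (\<forall>K\<in>C. int CARD('d) simplex K) \<and>
     (\<forall>K\<in>C. \<forall>K'\<in>C. (K \<inter> K') face_of K \<and> (K \<inter> K') face_of K')"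

definition mesh_domain :: "'d::finite pt set set \<Rightarrow> 'd pt set" where
  "mesh_domain C = interior (\<Union>C)"

definition iface_facets :: "'d::finite pt set set \<Rightarrow> 'd pt set \<Rightarrow> 'd pt set set" where
  "iface_facets C \<Gamma> = {E. (\<exists>K\<in>C. E face_of K) \<and> (int CARD('d) - 1) simplex E \<and> E \<subseteq> \<Gamma>}"

text \<open>G_h^cap, indexed by the pairs (E1,E2) producing it; only intersections of
  positive (d-1)-dimensional measure are kept (the others are null sets of Gamma).\<close>
definition inter_mesh :: "'d::finite pt set set \<Rightarrow> 'd pt set set \<Rightarrow> ('d pt set \<times> 'd pt set) set" where
  "inter_mesh G1 G2 = {(E1, E2). E1 \<in> G1 \<and> E2 \<in> G2 \<and> aff_dim (E1 \<inter> E2) = int CARD('d) - 1}"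

definition Vh :: "nat \<Rightarrow> 'd::finite pt set set \<Rightarrow> 'd pt set \<Rightarrow> ('d pt \<Rightarrow> real) set" where
  "Vh p C \<Gamma> = {v. continuous_on (\<Union>C) v \<and>
       (\<forall>K\<in>C. \<exists>q. poly_fun p q \<and> (\<forall>x\<in>K. v x = q x)) \<and>
       (\<forall>x\<in>frontier (mesh_domain C) - \<Gamma>. v x = 0)}"

text \<open>Q_h: piecewise polynomials of degree p on the intersection mesh (as L^2 functions:
  prescribed on the relative interiors of the elements).\<close>
definition Qh :: "nat \<Rightarrow> 'd::finite pt set set \<Rightarrow> 'd pt set set \<Rightarrow> ('d pt \<Rightarrow> real) set" where
  "Qh p G1 G2 = {\<mu>. \<forall>(E1, E2)\<in>inter_mesh G1 G2.
       \<exists>q. poly_fun p q \<and> (\<forall>x\<in>rel_interior (E1 \<inter> E2). \<mu> x = q x)}"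

definition grad :: "('d::finite pt \<Rightarrow> real) \<Rightarrow> 'd pt \<Rightarrow> 'd pt" where
  "grad f x = (\<chi> j. frechet_derivative f (at x) (axis j 1))"

text \<open>Surface integral over a flat (d-1)-dimensional set E: integrate the normal-constant
  extension of g over the slab of unit thickness above E (exact by Fubini).\<close>
definition facet_integral :: "'d::finite pt set \<Rightarrow> ('d pt \<Rightarrow> real) \<Rightarrow> real" where
  "facet_integral E g =
     integral {x. closest_point (affine hull E) x \<in> E \<and> infdist x (affine hull E) \<le> 1/2}
       (\<lambda>x. g (closest_point (affine hull E) x))"

definition iface_int :: "'d::finite pt set set \<Rightarrow> 'd pt set set \<Rightarrow> ('d pt \<Rightarrow> real) \<Rightarrow> real" where
  "iface_int G1 G2 g = (\<Sum>(E1, E2)\<in>inter_mesh G1 G2. facet_integral (E1 \<inter> E2) g)"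

text \<open>Normal derivatives (n points out of Omega_1): one-sided from inside Omega_1 for w_1,
  from inside Omega_2 for w_2.\<close>
definition nderiv1 :: "('d::finite pt \<Rightarrow> 'd pt) \<Rightarrow> ('d pt \<Rightarrow> real) \<Rightarrow> 'd pt \<Rightarrow> real" where
  "nderiv1 n w x = Lim (at_right 0) (\<lambda>t. (w x - w (x - t *\<^sub>R n x)) / t)"

definition nderiv2 :: "('d::finite pt \<Rightarrow> 'd pt) \<Rightarrow> ('d pt \<Rightarrow> real) \<Rightarrow> 'd pt \<Rightarrow> real" where
  "nderiv2 n w x = Lim (at_right 0) (\<lambda>t. (w (x + t *\<^sub>R n x) - w x) / t)"

definition is_iface_normal ::
  "'d::finite pt set set \<Rightarrow> 'd pt set set \<Rightarrow> 'd pt set \<Rightarrow> ('d pt \<Rightarrow> 'd pt) \<Rightarrow> bool" where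
  "is_iface_normal C1 C2 \<Gamma> n \<longleftrightarrow>
     (\<forall>E\<in>iface_facets C1 \<Gamma> \<union> iface_facets C2 \<Gamma>. \<forall>x\<in>rel_interior E.
        norm (n x) = 1 \<and> (\<forall>y\<in>E. \<forall>z\<in>E. n x \<bullet> (y - z) = 0)) \<and>
     (\<forall>E\<in>iface_facets C1 \<Gamma>. \<forall>x\<in>rel_interior E.
        eventually (\<lambda>t. x - t *\<^sub>R n x \<in> mesh_domain C1) (at_right 0)) \<and>
     (\<forall>E\<in>iface_facets C2 \<Gamma>. \<forall>x\<in>rel_interior E.
        eventually (\<lambda>t. x + t *\<^sub>R n x \<in> mesh_domain C2) (at_right 0))"

definition Bform ::
  "'d::finite pt set set \<Rightarrow> 'd pt set set \<Rightarrow> 'd pt set \<Rightarrow> real \<Rightarrow> real \<Rightarrow>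
   ('d pt \<Rightarrow> real) \<Rightarrow> ('d pt \<Rightarrow> real) \<Rightarrow> ('d pt \<Rightarrow> real) \<Rightarrow>
   ('d pt \<Rightarrow> real) \<Rightarrow> ('d pt \<Rightarrow> real) \<Rightarrow> ('d pt \<Rightarrow> real) \<Rightarrow> real" where
  "Bform C1 C2 \<Gamma> k1 k2 w1 w2 \<xi> v1 v2 \<mu> =
     k1 * integral (mesh_domain C1) (\<lambda>x. grad w1 x \<bullet> grad v1 x)
   + k2 * integral (mesh_domain C2) (\<lambda>x. grad w2 x \<bullet> grad v2 x)
   - iface_int (iface_facets C1 \<Gamma>) (iface_facets C2 \<Gamma>) (\<lambda>x. (w1 x - w2 x) * \<mu> x)
   - iface_int (iface_facets C1 \<Gamma>) (iface_facets C2 \<Gamma>) (\<lambda>x. (v1 x - v2 x) * \<xi> x)"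

definition Sform ::
  "('d::finite pt \<Rightarrow> 'd pt) \<Rightarrow> 'd pt set set \<Rightarrow> 'd pt set set \<Rightarrow> 'd pt set \<Rightarrow> real \<Rightarrow> real \<Rightarrow>
   ('d pt \<Rightarrow> real) \<Rightarrow> ('d pt \<Rightarrow> real) \<Rightarrow> ('d pt \<Rightarrow> real) \<Rightarrow>
   ('d pt \<Rightarrow> real) \<Rightarrow> ('d pt \<Rightarrow> real) \<Rightarrow> ('d pt \<Rightarrow> real) \<Rightarrow> real" where
  "Sform n C1 C2 \<Gamma> k1 k2 w1 w2 \<xi> v1 v2 \<mu> =
     (\<Sum>E\<in>iface_facets C1 \<Gamma>. diameter E / k1 *
        facet_integral E (\<lambda>x. (\<xi> x - k1 * nderiv1 n w1 x) * (\<mu> x - k1 * nderiv1 n v1 x)))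
   + (\<Sum>E\<in>iface_facets C2 \<Gamma>. diameter E / k2 *
        facet_integral E (\<lambda>x. (\<xi> x - k2 * nderiv2 n w2 x) * (\<mu> x - k2 * nderiv2 n v2 x)))"

definition Bh_form ::
  "real \<Rightarrow> ('d::finite pt \<Rightarrow> 'd pt) \<Rightarrow> 'd pt set set \<Rightarrow> 'd pt set set \<Rightarrow> 'd pt set \<Rightarrow> real \<Rightarrow> real \<Rightarrow>
   ('d pt \<Rightarrow> real) \<Rightarrow> ('d pt \<Rightarrow> real) \<Rightarrow> ('d pt \<Rightarrow> real) \<Rightarrow>
   ('d pt \<Rightarrow> real) \<Rightarrow> ('d pt \<Rightarrow> real) \<Rightarrow> ('d pt \<Rightarrow> real) \<Rightarrow> real" where
  "Bh_form \<alpha> n C1 C2 \<Gamma> k1 k2 w1 w2 \<xi> v1 v2 \<mu> =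
     Bform C1 C2 \<Gamma> k1 k2 w1 w2 \<xi> v1 v2 \<mu> - \<alpha> * Sform n C1 C2 \<Gamma> k1 k2 w1 w2 \<xi> v1 v2 \<mu>"

definition Lform :: "'d::finite pt set set \<Rightarrow> 'd pt set set \<Rightarrow> ('d pt \<Rightarrow> real) \<Rightarrow>
   ('d pt \<Rightarrow> real) \<Rightarrow> ('d pt \<Rightarrow> real) \<Rightarrow> real" where
  "Lform C1 C2 f v1 v2 =
     integral (mesh_domain C1) (\<lambda>x. f x * v1 x) + integral (mesh_domain C2) (\<lambda>x. f x * v2 x)"

text \<open>beta, gamma and the weighted flux average / flux jump, with h1 = h_{E1}, h2 = h_{E2}
  on the intersection element E1 \<inter> E2.\<close>
definition beta_w :: "real \<Rightarrow> real \<Rightarrow> real \<Rightarrow> real \<Rightarrow> real \<Rightarrow> real" where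
  "beta_w \<alpha> k1 k2 h1 h2 = inverse \<alpha> * k1 * k2 / (k2 * h1 + k1 * h2)"

definition gamma_w :: "real \<Rightarrow> real \<Rightarrow> real \<Rightarrow> real \<Rightarrow> real \<Rightarrow> real" where
  "gamma_w \<alpha> k1 k2 h1 h2 = \<alpha> * h1 * h2 / (k2 * h1 + k1 * h2)"

definition flux_avg :: "('d::finite pt \<Rightarrow> 'd pt) \<Rightarrow> real \<Rightarrow> real \<Rightarrow> real \<Rightarrow> real \<Rightarrow>
   ('d pt \<Rightarrow> real) \<Rightarrow> ('d pt \<Rightarrow> real) \<Rightarrow> 'd pt \<Rightarrow> real" where
  "flux_avg n k1 k2 h1 h2 w1 w2 x =
     k2 * h1 / (k2 * h1 + k1 * h2) * (k1 * nderiv1 n w1 x)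
   + k1 * h2 / (k2 * h1 + k1 * h2) * (k2 * nderiv2 n w2 x)"

definition flux_jump :: "('d::finite pt \<Rightarrow> 'd pt) \<Rightarrow> real \<Rightarrow> real \<Rightarrow>
   ('d pt \<Rightarrow> real) \<Rightarrow> ('d pt \<Rightarrow> real) \<Rightarrow> 'd pt \<Rightarrow> real" where
  "flux_jump n k1 k2 w1 w2 x = k1 * nderiv1 n w1 x - k2 * nderiv2 n w2 x"

definition bh_form ::
  "real \<Rightarrow> ('d::finite pt \<Rightarrow> 'd pt) \<Rightarrow> 'd pt set set \<Rightarrow> 'd pt set set \<Rightarrow> 'd pt set \<Rightarrow> real \<Rightarrow> real \<Rightarrow>
   ('d pt \<Rightarrow> real) \<Rightarrow> ('d pt \<Rightarrow> real) \<Rightarrow> ('d pt \<Rightarrow> real) \<Rightarrow> ('d pt \<Rightarrow> real) \<Rightarrow> real" where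
  "bh_form \<alpha> n C1 C2 \<Gamma> k1 k2 w1 w2 v1 v2 =
     (\<Sum>(E1, E2)\<in>inter_mesh (iface_facets C1 \<Gamma>) (iface_facets C2 \<Gamma>).
        let h1 = diameter E1; h2 = diameter E2; E = E1 \<inter> E2 in
          facet_integral E (\<lambda>x. beta_w \<alpha> k1 k2 h1 h2 * (w1 x - w2 x) * (v1 x - v2 x))
        - facet_integral E (\<lambda>x. gamma_w \<alpha> k1 k2 h1 h2 * flux_jump n k1 k2 w1 w2 x * flux_jump n k1 k2 v1 v2 x)
        - facet_integral E (\<lambda>x. flux_avg n k1 k2 h1 h2 w1 w2 x * (v1 x - v2 x))
        - facet_integral E (\<lambda>x. (w1 x - w2 x) * flux_avg n k1 k2 h1 h2 v1 v2 x))"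

definition ah_form ::
  "real \<Rightarrow> ('d::finite pt \<Rightarrow> 'd pt) \<Rightarrow> 'd pt set set \<Rightarrow> 'd pt set set \<Rightarrow> 'd pt set \<Rightarrow> real \<Rightarrow> real \<Rightarrow>
   ('d pt \<Rightarrow> real) \<Rightarrow> ('d pt \<Rightarrow> real) \<Rightarrow> ('d pt \<Rightarrow> real) \<Rightarrow> ('d pt \<Rightarrow> real) \<Rightarrow> real" where
  "ah_form \<alpha> n C1 C2 \<Gamma> k1 k2 w1 w2 v1 v2 =
     k1 * integral (mesh_domain C1) (\<lambda>x. grad w1 x \<bullet> grad v1 x)
   + k2 * integral (mesh_domain C2) (\<lambda>x. grad w2 x \<bullet> grad v2 x)
   + bh_form \<alpha> n C1 C2 \<Gamma> k1 k2 w1 w2 v1 v2"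

end

theory Submission
  imports Defs
begin

text \<open>
  All discrete functions are polynomials on each piece \<open>E\<^sub>1 \<inter> E\<^sub>2\<close> of the intersection
  mesh, and so are their one-sided normal derivatives; every interface term of \<open>\<B>\<^sub>h\<close> is
  therefore a sum over the pieces of integrals of such polynomials.
  Testing the discrete problem with \<open>v = 0\<close> and with \<open>\<mu>\<close> equal, on one piece only, to the
  residual \<open>G = \<lambda>\<^sub>h - ({{k \<partial>u\<^sub>h/\<partial>n}} - \<beta>[[u\<^sub>h]])\<close>, the weights are such that the
  interface integrand collapses to \<open>\<alpha> (h\<^sub>1/k\<^sub>1 + h\<^sub>2/k\<^sub>2) G\<^sup>2\<close>; its integral vanishes,
  so \<open>G = 0\<close> on the piece. Substituting this formula for \<open>\<lambda>\<^sub>h\<close> into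
  \<open>\<B>\<^sub>h(u\<^sub>h, \<lambda>\<^sub>h; v\<^sub>h, 0)\<close> turns its interface part, piece by piece, into \<open>b\<^sub>h(u\<^sub>h, v\<^sub>h)\<close>.
\<close>

section \<open>Polynomials of bounded total degree\<close>

definition poly_exponents :: "nat \<Rightarrow> ('d::finite \<Rightarrow> nat) set" where
  "poly_exponents p = {a. sum a UNIV \<le> p}"

definition monomial_fun :: "('d::finite \<Rightarrow> nat) \<Rightarrow> 'd pt \<Rightarrow> real" where
  "monomial_fun a x = (\<Prod>i\<in>UNIV. (x $ i) ^ a i)"

lemma finite_poly_exponents: "finite (poly_exponents p :: ('d::finite \<Rightarrow> nat) set)"
proof -
  have "poly_exponents p \<subseteq> PiE (UNIV::'d set) (\<lambda>_. {..p})"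
  proof
    fix a :: "'d \<Rightarrow> nat" assume "a \<in> poly_exponents p"
    then have "sum a UNIV \<le> p" by (simp add: poly_exponents_def)
    moreover have "a i \<le> sum a UNIV" for i
      by (rule member_le_sum) auto
    ultimately show "a \<in> PiE UNIV (\<lambda>_. {..p})"
      by (auto simp: PiE_def extensional_def intro: order_trans)
  qed
  then show ?thesis by (rule finite_subset) (auto intro: finite_PiE)
qed

lemma poly_fun_iff: "poly_fun p q \<longleftrightarrow> (\<exists>c. q = (\<lambda>x. \<Sum>a\<in>poly_exponents p. c a * monomial_fun a x))"
  by (simp add: poly_fun_def poly_exponents_def monomial_fun_def)

lemma poly_fun_add:
  assumes "poly_fun p f" "poly_fun p g" shows "poly_fun p (\<lambda>x. f x + g x)"
proof -
  obtain c1 c2 where "f = (\<lambda>x. \<Sum>a\<in>poly_exponents p. c1 a * monomial_fun a x)" "g = (\<lambda>x. \<Sum>a\<in>poly_exponents p. c2 a * monomial_fun a x)"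
    using assms by (auto simp: poly_fun_iff)
  then show ?thesis unfolding poly_fun_iff
    by (intro exI[of _ "\<lambda>a. c1 a + c2 a"]) (auto simp: sum.distrib distrib_right)
qed

lemma poly_fun_scale:
  assumes "poly_fun p f" shows "poly_fun p (\<lambda>x. r * f x)"
proof -
  obtain c1 where "f = (\<lambda>x. \<Sum>a\<in>poly_exponents p. c1 a * monomial_fun a x)"
    using assms by (auto simp: poly_fun_iff)
  then show ?thesis unfolding poly_fun_iff
    by (intro exI[of _ "\<lambda>a. r * c1 a"]) (auto simp: sum_distrib_left mult.assoc)
qed

lemma poly_fun_zero: "poly_fun p (\<lambda>x. 0)"
  unfolding poly_fun_iff by (intro exI[of _ "\<lambda>a. 0"]) simp

lemma poly_fun_sum:
  assumes "finite I" "\<And>i. i \<in> I \<Longrightarrow> poly_fun p (f i)"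
  shows "poly_fun p (\<lambda>x. \<Sum>i\<in>I. f i x)"
  using assms by (induction I rule: finite_induct) (auto intro: poly_fun_add poly_fun_zero)

lemma poly_fun_monomial_fun:
  assumes "b \<in> poly_exponents p" shows "poly_fun p (monomial_fun b)"
  unfolding poly_fun_iff
proof (intro exI[of _ "\<lambda>a. if a = b then 1 else 0"] ext)
  fix x
  have "(\<Sum>a\<in>poly_exponents p. (if a = b then 1 else 0) * monomial_fun a x) = (\<Sum>a\<in>poly_exponents p. if a = b then monomial_fun a x else 0)"
    by (rule sum.cong) auto
  also have "\<dots> = monomial_fun b x" using assms finite_poly_exponents[of p] by (subst sum.remove[of _ b]) auto
  finally show "monomial_fun b x = (\<Sum>a\<in>poly_exponents p. (if a = b then 1 else 0) * monomial_fun a x)" by simp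
qed

lemma poly_fun_const: "poly_fun p (\<lambda>x. r)"
proof -
  have "(\<lambda>_. 0) \<in> poly_exponents p" by (simp add: poly_exponents_def)
  then have "poly_fun p (monomial_fun (\<lambda>_. 0))" by (rule poly_fun_monomial_fun)
  then have "poly_fun p (\<lambda>x. r * monomial_fun (\<lambda>_. 0) x)" by (rule poly_fun_scale)
  then show ?thesis by (simp add: monomial_fun_def)
qed

lemma poly_fun_diff:
  assumes "poly_fun p f" "poly_fun p g" shows "poly_fun p (\<lambda>x. f x - g x)"
  using poly_fun_add[OF assms(1) poly_fun_scale[OF assms(2), of "-1"]] by simp

lemma poly_fun_continuous_on:
  assumes "poly_fun p f" shows "continuous_on S f"
proof -
  obtain c1 where "f = (\<lambda>x. \<Sum>a\<in>poly_exponents p. c1 a * monomial_fun a x)"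
    using assms by (auto simp: poly_fun_iff)
  then show ?thesis unfolding monomial_fun_def
    by (auto intro!: continuous_intros)
qed

lemma monomial_fun_line_deriv:
  fixes x N :: "'d::finite pt"
  shows "((\<lambda>s. monomial_fun a (x + s *\<^sub>R N)) has_field_derivative
     (\<Sum>i\<in>UNIV. (real (a i) * N $ i) * monomial_fun (a(i := a i - 1)) x)) (at 0)"
proof -
  have d: "((\<lambda>s. (x $ i + s * N $ i) ^ a i) has_field_derivative
          real (a i) * (x $ i) ^ (a i - 1) * N $ i) (at 0)" for i
    by (auto intro!: derivative_eq_intros)
  have "((\<lambda>s. \<Prod>i\<in>UNIV. (x $ i + s * N $ i) ^ a i) has_field_derivative
     (\<Sum>i\<in>UNIV. real (a i) * (x $ i) ^ (a i - 1) * N $ i * (\<Prod>j\<in>UNIV-{i}. (x $ j + 0 * N $ j) ^ a j))) (at 0)"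
    by (rule has_field_derivative_prod) (rule d)
  moreover have "(\<Sum>i\<in>UNIV. real (a i) * (x $ i) ^ (a i - 1) * N $ i * (\<Prod>j\<in>UNIV-{i}. (x $ j + 0 * N $ j) ^ a j))
      = (\<Sum>i\<in>UNIV. (real (a i) * N $ i) * monomial_fun (a(i := a i - 1)) x)"
  proof (rule sum.cong[OF refl])
    fix i :: 'd
    have "monomial_fun (a(i := a i - 1)) x = (x $ i) ^ (a i - 1) * (\<Prod>j\<in>UNIV-{i}. (x $ j) ^ (a(i := a i - 1)) j)"
      unfolding monomial_fun_def by (subst prod.remove[of UNIV i]) auto
    also have "(\<Prod>j\<in>UNIV-{i}. (x $ j) ^ (a(i := a i - 1)) j) = (\<Prod>j\<in>UNIV-{i}. (x $ j) ^ a j)"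
      by (rule prod.cong) auto
    finally have eq: "monomial_fun (a(i := a i - 1)) x = (x $ i) ^ (a i - 1) * (\<Prod>j\<in>UNIV-{i}. (x $ j) ^ a j)" .
    show "real (a i) * (x $ i) ^ (a i - 1) * N $ i * (\<Prod>j\<in>UNIV-{i}. (x $ j + 0 * N $ j) ^ a j)
      = (real (a i) * N $ i) * monomial_fun (a(i := a i - 1)) x" unfolding eq by simp
  qed
  moreover have "(\<lambda>s. monomial_fun a (x + s *\<^sub>R N)) = (\<lambda>s. \<Prod>i\<in>UNIV. (x $ i + s * N $ i) ^ a i)"
    by (simp add: monomial_fun_def)
  ultimately show ?thesis by simp
qed

lemma poly_exponents_decrement: "a \<in> poly_exponents p \<Longrightarrow> a(i := a i - 1) \<in> poly_exponents p"
  unfolding poly_exponents_def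
proof -
  assume "a \<in> {a. sum a UNIV \<le> p}"
  moreover have "sum (a(i := a i - 1)) UNIV \<le> sum a UNIV" by (rule sum_mono) auto
  ultimately show "a(i := a i - 1) \<in> {a. sum a UNIV \<le> p}" by auto
qed

lemma poly_fun_line_deriv:
  fixes N :: "'d::finite pt"
  assumes "poly_fun p q"
  shows "\<exists>q'. poly_fun p q' \<and> (\<forall>x. ((\<lambda>s. q (x + s *\<^sub>R N)) has_field_derivative q' x) (at 0))"
proof -
  obtain c where c: "q = (\<lambda>x. \<Sum>a\<in>poly_exponents p. c a * monomial_fun a x)"
    using assms by (auto simp: poly_fun_iff)
  define q' where "q' = (\<lambda>x. \<Sum>a\<in>poly_exponents p. c a * (\<Sum>i\<in>UNIV. (real (a i) * N $ i) * monomial_fun (a(i := a i - 1)) x))"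
  have "poly_fun p q'"
    unfolding q'_def
    by (intro poly_fun_sum poly_fun_scale finite_poly_exponents poly_fun_monomial_fun poly_exponents_decrement) auto
  moreover have "((\<lambda>s. q (x + s *\<^sub>R N)) has_field_derivative q' x) (at 0)" for x
    unfolding c q'_def
    by (intro DERIV_sum DERIV_cmult monomial_fun_line_deriv)
  ultimately show ?thesis by blast
qed

section \<open>Hyperplanes and simplices\<close>

lemma small_shift_norm_less:
  fixes h :: "'a::real_normed_vector"
  assumes "0 < l" "l < 1/2" "2 * l * (norm h + 1) < r"
  shows "norm ((l / (1 - l)) *\<^sub>R h) < r"
proof -
  have "norm ((l / (1 - l)) *\<^sub>R h) = (l / (1 - l)) * norm h" using assms(1,2) by simp
  also have "\<dots> \<le> 2 * l * norm h"
    by (rule mult_right_mono) (use assms(1,2) in \<open>simp_all add: field_simps\<close>)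
  also have "\<dots> < r" using assms by (simp add: algebra_simps)
  finally show ?thesis .
qed

lemma inward_point_as_convex_combination:
  fixes a x y0 :: "'a::real_vector"
  assumes "l < 1" "l * (c / d) = t"
  shows "x - t *\<^sub>R a = (1 - (1 - l)) *\<^sub>R y0
           + (1 - l) *\<^sub>R (x - (l / (1 - l)) *\<^sub>R ((y0 - x) + (c / d) *\<^sub>R a))"
proof -
  have "(1 - l) *\<^sub>R (x - (l / (1 - l)) *\<^sub>R ((y0 - x) + (c / d) *\<^sub>R a))
      = (1 - l) *\<^sub>R x - l *\<^sub>R ((y0 - x) + (c / d) *\<^sub>R a)"
    using assms(1) by (simp add: scaleR_diff_right)
  then show ?thesis by (simp add: algebra_simps flip: assms(2))
qed

lemma eventually_inward_interior:
  fixes K E :: "'d::finite pt set" and a :: "'d pt"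
  assumes cK: "convex K" and iK: "interior K \<noteq> {}" and EK: "E \<subseteq> K" and Ka: "K \<subseteq> {y. a \<bullet> y \<le> b}"
    and hE: "affine hull E = {y. a \<bullet> y = b}" and a0: "a \<noteq> 0" and x: "x \<in> rel_interior E"
  shows "eventually (\<lambda>t. x - t *\<^sub>R a \<in> interior K) (at_right 0)"
proof -
  obtain y0 where y0: "y0 \<in> interior K" using iK by auto
  have aa: "a \<bullet> a > 0" using a0 by simp
  have "interior K \<subseteq> {y. a \<bullet> y < b}"
    using interior_mono[OF Ka] interior_halfspace_le[OF a0] by simp
  then have "a \<bullet> y0 < b" using y0 by auto
  define c where "c = b - a \<bullet> y0"
  have c: "c > 0" using \<open>a \<bullet> y0 < b\<close> by (simp add: c_def)
  have xE: "x \<in> E" using x rel_interior_subset by blast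
  have ax: "a \<bullet> x = b" using hull_inc[OF xE, of affine] hE by auto
  obtain r where r: "r > 0" "ball x r \<inter> affine hull E \<subseteq> E" using x mem_rel_interior_ball by blast
  define h where "h = (y0 - x) + (c / (a \<bullet> a)) *\<^sub>R a"
  have ha: "a \<bullet> h = 0" using aa by (simp add: h_def inner_add_right inner_diff_right ax c_def)
  define A where "A = (a \<bullet> a) / c"
  have A: "A > 0" using aa c by (simp add: A_def)
  define \<delta> where "\<delta> = min (1 / (2*A)) (r / (2 * A * (norm h + 1)))"
  have hp: "norm h + 1 > 0" by (smt (verit) norm_ge_zero)
  have \<delta>: "\<delta> > 0" using A r hp by (simp add: \<delta>_def)
  show ?thesis
  proof (rule eventually_at_rightI[OF _ \<delta>])
    fix t assume t: "t \<in> {0<..<\<delta>}"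
    define l where "l = t * A"
    have l0: "0 < l" using t A by (simp add: l_def)
    have "t < 1 / (2*A)" using t by (simp add: \<delta>_def)
    then have l1: "l < 1/2" using A by (simp add: l_def field_simps)
    then have l1': "l < 1" by simp
    have "t < r / (2 * A * (norm h + 1))" using t by (simp add: \<delta>_def)
    moreover have D: "2 * A * (norm h + 1) > 0" using A hp by simp
    ultimately have "t * (2 * A * (norm h + 1)) < r" by (simp add: pos_less_divide_eq)
    then have lh: "2 * l * (norm h + 1) < r" by (simp add: l_def algebra_simps)
    define x' where "x' = x - (l / (1 - l)) *\<^sub>R h"
    have "a \<bullet> x' = b" by (simp add: x'_def inner_diff_right ha ax)
    then have x'H: "x' \<in> affine hull E" using hE by auto
    have "norm ((l / (1 - l)) *\<^sub>R h) < r" by (rule small_shift_norm_less[OF l0 l1 lh])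
    then have "dist x x' < r" by (simp add: x'_def dist_norm)
    then have "x' \<in> E" using r x'H by auto
    then have x'K: "x' \<in> closure K" using EK closure_subset by auto
    have "a \<bullet> y0 \<noteq> a \<bullet> x'" using \<open>a \<bullet> y0 < b\<close> \<open>a \<bullet> x' = b\<close> by simp
    then have ne: "y0 \<noteq> x'" by auto
    have lc: "l * (c / (a \<bullet> a)) = t" using aa c by (simp add: l_def A_def)
    have eqp: "x - t *\<^sub>R a = (1 - (1 - l)) *\<^sub>R y0 + (1 - l) *\<^sub>R x'"
      unfolding x'_def h_def by (rule inward_point_as_convex_combination[OF l1' lc])
    have "x - t *\<^sub>R a \<in> open_segment y0 x'"
      unfolding in_segment(2) using ne l0 l1 eqp by (intro conjI exI[of _ "1 - l"]) auto
    then show "x - t *\<^sub>R a \<in> interior K"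
      using in_interior_closure_convex_segment[OF cK y0 x'K] by blast
  qed
qed

lemma orthogonal_hyperplane_imp_parallel:
  fixes E :: "'d::finite pt set"
  assumes hE: "affine hull E = {y. a \<bullet> y = b}" and a0: "a \<noteq> 0" and ne: "E \<noteq> {}"
    and perp: "\<forall>y\<in>E. \<forall>z\<in>E. u \<bullet> (y - z) = 0"
  shows "u = ((u \<bullet> a) / (a \<bullet> a)) *\<^sub>R a"
proof -
  obtain e where e: "e \<in> E" using ne by auto
  have "E \<subseteq> {y. u \<bullet> y = u \<bullet> e}"
  proof
    fix y assume "y \<in> E"
    then have "u \<bullet> (y - e) = 0" using perp e by blast
    then show "y \<in> {y. u \<bullet> y = u \<bullet> e}" by (simp add: inner_diff_right)
  qed
  then have hs: "affine hull E \<subseteq> {y. u \<bullet> y = u \<bullet> e}" by (rule hull_minimal) (rule affine_hyperplane)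
  define c where "c = (u \<bullet> a) / (a \<bullet> a)"
  define v where "v = u - c *\<^sub>R a"
  have aa: "a \<bullet> a > 0" using a0 by simp
  have "a \<bullet> v = a \<bullet> u - c * (a \<bullet> a)" by (simp only: v_def inner_diff_right inner_scaleR_right)
  also have "\<dots> = 0" using aa by (simp add: c_def inner_commute[of a u])
  finally have av: "a \<bullet> v = 0" .
  have ae: "a \<bullet> e = b" using hull_inc[OF e, of affine] hE by auto
  have "a \<bullet> (e + v) = b" using ae av by (simp add: inner_add_right)
  then have "e + v \<in> affine hull E" using hE by simp
  then have "u \<bullet> (e + v) = u \<bullet> e" using hs by auto
  then have uv: "u \<bullet> v = 0" by (simp add: inner_add_right)
  have "v \<bullet> v = u \<bullet> v - c * (a \<bullet> v)" by (subst (1) v_def) (simp only: inner_diff_left inner_scaleR_left)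
  also have "\<dots> = 0" using uv av by simp
  finally have "v = 0" by simp
  then show ?thesis by (simp add: v_def c_def)
qed

lemma unit_parallel_cases:
  fixes u N :: "'d::finite pt"
  assumes "norm u = 1" "norm N = 1" "u = ((u \<bullet> N) / (N \<bullet> N)) *\<^sub>R N"
  shows "u = N \<or> u = - N"
proof -
  have NN: "N \<bullet> N = 1" using assms(2) by (simp add: dot_square_norm)
  define s where "s = u \<bullet> N"
  have us: "u = s *\<^sub>R N" using assms(3) NN by (simp add: s_def)
  then have "\<bar>s\<bar> = 1" using assms by simp
  then have "s = 1 \<or> s = -1" by auto
  then show ?thesis using us by auto
qed

lemma hyperplane_normal_orthogonal:
  assumes "affine hull E = {y. N \<bullet> y = c}"
  shows "\<forall>y\<in>E. \<forall>z\<in>E. N \<bullet> (y - z) = 0"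
  using hull_inc[of _ E affine] assms by (auto simp: inner_diff_right)

lemma unit_orthogonal_to_facet:
  fixes E :: "'d::finite pt set"
  assumes "affine hull E = {y. N \<bullet> y = c}" "norm N = 1" "E \<noteq> {}"
    and "norm u = 1" "\<forall>y\<in>E. \<forall>z\<in>E. u \<bullet> (y - z) = 0"
  shows "u = N \<or> u = - N"
proof -
  have "N \<noteq> 0" using assms(2) by auto
  then show ?thesis
    using unit_parallel_cases[OF assms(4,2) orthogonal_hyperplane_imp_parallel[OF assms(1) _ assms(3,5)]] by blast
qed

lemma closest_point_affine_orthogonal:
  fixes H :: "'d::finite pt set"
  assumes "affine H" "closed H" "H \<noteq> {}" "y \<in> H" "z \<in> H"
  shows "(x - closest_point H x) \<bullet> (y - z) = 0"
proof -
  define p where "p = closest_point H x"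
  have pH: "p \<in> H" unfolding p_def by (rule closest_point_in_set[OF assms(2,3)])
  have cv: "convex H" using assms(1) by (rule affine_imp_convex)
  have key: "(x - p) \<bullet> (w - p) = 0" if w: "w \<in> H" for w
  proof -
    have "(x - p) \<bullet> (w - p) \<le> 0" unfolding p_def by (rule closest_point_dot[OF cv assms(2) w])
    moreover have w2: "p + 1 *\<^sub>R (p - w) \<in> H" by (rule mem_affine_3_minus[OF assms(1) pH pH w])
    have "(x - p) \<bullet> ((p + 1 *\<^sub>R (p - w)) - p) \<le> 0"
      unfolding p_def by (rule closest_point_dot[OF cv assms(2) w2[unfolded p_def]])
    then have "(x - p) \<bullet> (w - p) \<ge> 0" by (simp add: inner_diff_right)
    ultimately show ?thesis by simp
  qed
  have "(x - p) \<bullet> (y - z) = (x - p) \<bullet> (y - p) - (x - p) \<bullet> (z - p)"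
    by (simp add: inner_diff_right)
  then show ?thesis using key[OF assms(4)] key[OF assms(5)] by (simp add: p_def)
qed

lemma negligible_closest_point_vimage:
  fixes F :: "'d::finite pt set" and N :: "'d pt"
  assumes H: "H = {y. N \<bullet> y = c}" and N0: "N \<noteq> 0" and FH: "F \<subseteq> H"
    and ad: "aff_dim F < int CARD('d) - 1"
  shows "negligible {x. closest_point H x \<in> F}"
proof (cases "F = {}")
  case True then show ?thesis by simp
next
  case False
  then obtain f0 where f0: "f0 \<in> F" by auto
  have aH: "affine H" using H affine_hyperplane by simp
  have cH: "closed H" using H closed_hyperplane by simp
  have neH: "H \<noteq> {}" using f0 FH by auto
  have hH: "affine hull H = {y. N \<bullet> y = c}" using aH H by simp
  have orth: "x - closest_point H x = (((x - closest_point H x) \<bullet> N) / (N \<bullet> N)) *\<^sub>R N" for x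
    by (rule orthogonal_hyperplane_imp_parallel[OF hH N0 neH]) (use closest_point_affine_orthogonal[OF aH cH neH] in blast)
  define T where "T = affine hull (insert (f0 + N) F)"
  have aT: "affine T" by (simp add: T_def)
  have sub: "{x. closest_point H x \<in> F} \<subseteq> T"
  proof
    fix x assume "x \<in> {x. closest_point H x \<in> F}"
    then have px: "closest_point H x \<in> T" by (auto simp: T_def hull_inc)
    define s where "s = ((x - closest_point H x) \<bullet> N) / (N \<bullet> N)"
    have xs: "x - closest_point H x = s *\<^sub>R N" unfolding s_def by (rule orth)
    have "closest_point H x + s *\<^sub>R ((f0 + N) - f0) \<in> T"
      by (rule mem_affine_3_minus[OF aT px]) (auto simp: T_def hull_inc f0)
    moreover have "closest_point H x + s *\<^sub>R ((f0 + N) - f0) = x"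
      by (simp add: xs[symmetric])
    ultimately show "x \<in> T" by simp
  qed
  have "aff_dim T \<le> aff_dim F + 1" by (simp add: T_def aff_dim_insert)
  then have "aff_dim T < int DIM('d pt)" using ad by simp
  then obtain a b where ab: "a \<noteq> 0" "T \<subseteq> {x. a \<bullet> x = b}" by (rule aff_lowdim_subset_hyperplane)
  have "negligible {x. a \<bullet> x = b}" using ab(1) by (intro negligible_hyperplane) simp
  then show ?thesis by (rule negligible_subset) (use sub ab(2) in blast)
qed

lemma full_simplex_interior:
  fixes K :: "'d::finite pt set"
  assumes "int CARD('d) simplex K"
  shows "interior K \<noteq> {}" "convex K"
proof -
  show cK: "convex K" by (rule convex_simplex[OF assms])
  have "affine hull K = UNIV" using aff_dim_eq_full[of K] aff_dim_simplex[OF assms] by simp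
  then have ri: "rel_interior K = interior K" by (rule rel_interior_interior)
  have "K \<noteq> {}"
  proof
    assume "K = {}" then have "aff_dim K = -1" by simp
    then show False using aff_dim_simplex[OF assms] by simp
  qed
  then show "interior K \<noteq> {}" using rel_interior_eq_empty[OF cK] ri by simp
qed

lemma simplex_facet_hyperplane:
  fixes K E :: "'d::finite pt set"
  assumes K: "int CARD('d) simplex K" and EK: "E face_of K" and adE: "aff_dim E = int CARD('d) - 1"
    and neE: "E \<noteq> {}"
  shows "\<exists>N c. norm N = 1 \<and> K \<subseteq> {y. N \<bullet> y \<le> c} \<and> E \<subseteq> K \<and> affine hull E = {y. N \<bullet> y = c}"
proof -
  have "polyhedron K" by (rule simplex_imp_polyhedron[OF K])
  then have "E exposed_face_of K" using EK exposed_face_of_polyhedron by blast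
  then obtain a b where ab: "K \<subseteq> {x. a \<bullet> x \<le> b}" "E = K \<inter> {x. a \<bullet> x = b}"
    unfolding exposed_face_of_def by blast
  have a0: "a \<noteq> 0"
  proof
    assume a: "a = 0"
    then have "E = K \<inter> {x. 0 = b}" using ab(2) by simp
    then have "E = K" using neE by (cases "b = 0") auto
    then show False using adE aff_dim_simplex[OF K] by simp
  qed
  define N where "N = (1 / norm a) *\<^sub>R a"
  define c where "c = b / norm a"
  have na: "norm a > 0" using a0 by simp
  have N1: "norm N = 1" using a0 by (simp add: N_def)
  have Ny: "N \<bullet> y = (a \<bullet> y) / norm a" for y by (simp add: N_def)
  have "K \<subseteq> {y. N \<bullet> y \<le> c}"
    using ab(1) na by (auto simp: Ny c_def divide_right_mono)
  moreover have EH: "E \<subseteq> {y. N \<bullet> y = c}" using ab(2) by (auto simp: Ny c_def)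
  moreover have "affine hull E = {y. N \<bullet> y = c}"
  proof -
    have sub: "affine hull E \<subseteq> {y. N \<bullet> y = c}" using EH by (rule hull_minimal) (rule affine_hyperplane)
    have N0: "N \<noteq> 0" using N1 by auto
    have "aff_dim (affine hull E) = aff_dim {y. N \<bullet> y = c}"
      using adE aff_dim_hyperplane[OF N0, of c] by simp
    then have "affine hull (affine hull E) = affine hull {y. N \<bullet> y = c}"
      using aff_dim_eq_full_gen[OF sub] by simp
    then show ?thesis by (simp add: affine_hyperplane)
  qed
  moreover have "E \<subseteq> K" using ab(2) by auto
  ultimately show ?thesis using N1 by blast
qed

lemma Lim_at_right_eventually_eq:
  assumes "eventually (\<lambda>t. f t = g t) (at_right (0::real))" "(g \<longlongrightarrow> l) (at_right 0)"
  shows "Lim (at_right 0) f = (l::real)"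
  by (rule tendsto_Lim) (use assms tendsto_cong in auto)

lemma forward_quotient_tendsto:
  fixes q :: "'d::finite pt \<Rightarrow> real"
  assumes "((\<lambda>s. q (x + s *\<^sub>R N)) has_field_derivative D) (at 0)"
  shows "((\<lambda>t. (q (x + t *\<^sub>R N) - q x) / t) \<longlongrightarrow> D) (at_right 0)"
proof -
  have "((\<lambda>s. q (x + s *\<^sub>R N)) has_field_derivative D) (at 0 within {0<..})"
    by (rule has_field_derivative_at_within[OF assms])
  then show ?thesis unfolding has_field_derivative_iff by simp
qed

lemma backward_quotient_tendsto:
  fixes q :: "'d::finite pt \<Rightarrow> real"
  assumes "((\<lambda>s. q (x + s *\<^sub>R N)) has_field_derivative D) (at 0)"
  shows "((\<lambda>t. (q x - q (x - t *\<^sub>R N)) / t) \<longlongrightarrow> D) (at_right 0)"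
proof -
  have a0: "((\<lambda>s. q (x + s *\<^sub>R N)) has_field_derivative D) (at (- 0))" using assms by simp
  have "((\<lambda>s. q (x + (- s) *\<^sub>R N)) has_field_derivative D * (- 1)) (at 0)"
    by (rule DERIV_chain2[where g=uminus and x=0, OF a0]) (auto intro!: derivative_eq_intros)
  then have "((\<lambda>s. q (x + (- s) *\<^sub>R N)) has_field_derivative D * (- 1)) (at 0 within {0<..})"
    by (rule has_field_derivative_at_within)
  then have "((\<lambda>t. (q (x - t *\<^sub>R N) - q x) / t) \<longlongrightarrow> - D) (at_right 0)"
    unfolding has_field_derivative_iff by simp
  then have "((\<lambda>t. - ((q (x - t *\<^sub>R N) - q x) / t)) \<longlongrightarrow> - (- D)) (at_right 0)"
    by (rule tendsto_minus)
  then show ?thesis by (simp only: minus_divide_left minus_diff_eq minus_minus)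
qed

section \<open>Integrals over normal slabs\<close>

definition normal_slab :: "'d::finite pt set \<Rightarrow> 'd pt set \<Rightarrow> 'd pt set" where
  "normal_slab H P = {x. closest_point H x \<in> P \<and> infdist x H \<le> 1/2}"

lemma facet_integral_normal_slab:
  "facet_integral E g = integral (normal_slab (affine hull E) E) (\<lambda>x. g (closest_point (affine hull E) x))"
  by (simp add: facet_integral_def normal_slab_def)

lemma continuous_integrable_on_bounded:
  fixes F :: "'d::finite pt \<Rightarrow> real"
  assumes cF: "continuous_on UNIV F" and bS: "bounded S" and mS: "S \<in> sets lebesgue"
  shows "F integrable_on S"
proof -
  have "compact (closure S)" using bS by simp
  then have "compact (F ` closure S)" by (rule compact_continuous_image[OF continuous_on_subset[OF cF], rotated]) auto
  then have "bounded (F ` closure S)" by (rule compact_imp_bounded)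
  then obtain B where B: "\<And>y. y \<in> F ` closure S \<Longrightarrow> norm y \<le> B" unfolding bounded_iff by blast
  have "(\<lambda>x. B) integrable_on S" by (rule integrable_on_const) (rule bounded_set_imp_lmeasurable[OF bS mS])
  moreover have "F \<in> borel_measurable (lebesgue_on S)"
    by (rule continuous_imp_measurable_on_sets_lebesgue[OF continuous_on_subset[OF cF] mS]) auto
  moreover have "\<And>x. x \<in> S \<Longrightarrow> \<bar>F x\<bar> \<le> B" using B closure_subset by force
  ultimately show ?thesis using measurable_bounded_by_integrable_imp_integrable_real[of F S "\<lambda>x. B"] mS by blast
qed

lemma continuous_closest_point_affine:
  fixes H :: "'d::finite pt set"
  assumes "affine H" "closed H" "H \<noteq> {}"
  shows "continuous (at x) (closest_point H)" "continuous_on S (closest_point H)"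
  using continuous_at_closest_point[OF affine_imp_convex[OF assms(1)] assms(2,3)]
    continuous_on_closest_point[OF affine_imp_convex[OF assms(1)] assms(2,3)] by auto

lemma infdist_closest_point:
  fixes H :: "'d::finite pt set"
  assumes "closed H" "H \<noteq> {}"
  shows "infdist x H = dist x (closest_point H x)"
  by (simp add: infdist_eq_setdist setdist_closest_point[OF assms])

lemma normal_slab_bounded_measurable:
  fixes H P :: "'d::finite pt set"
  assumes aH: "affine H" and cH: "closed H" and neH: "H \<noteq> {}"
    and oP: "openin (top_of_set H) P" and bP: "bounded P"
  shows "bounded (normal_slab H P)" "normal_slab H P \<in> sets lebesgue"
proof -
  obtain B where B: "\<And>y. y \<in> P \<Longrightarrow> norm y \<le> B" using bP unfolding bounded_iff by blast
  show "bounded (normal_slab H P)" unfolding bounded_iff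
  proof (intro exI ballI)
    fix x assume x: "x \<in> normal_slab H P"
    then have "dist x (closest_point H x) \<le> 1/2" using infdist_closest_point[OF cH neH] by (simp add: normal_slab_def)
    moreover have "norm (closest_point H x) \<le> B" using x B by (simp add: normal_slab_def)
    moreover have "norm x \<le> norm (closest_point H x) + norm (x - closest_point H x)"
      using norm_triangle_ineq[of "closest_point H x" "x - closest_point H x"] by simp
    ultimately show "norm x \<le> B + 1/2" by (simp add: dist_norm)
  qed
  obtain T where T: "open T" "P = H \<inter> T" using oP unfolding openin_open by blast
  have eq: "normal_slab H P = (closest_point H -` T) \<inter> {x. infdist x H \<le> 1/2}"
    using closest_point_in_set[OF cH neH] T(2) by (auto simp: normal_slab_def)
  have "open (closest_point H -` T)" by (rule continuous_open_vimage[OF T(1)]) (rule continuous_closest_point_affine[OF aH cH neH])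
  then have m1: "closest_point H -` T \<in> sets lebesgue" using lebesgue_openin[of UNIV] by simp
  have "closed {x. infdist x H \<le> 1/2}"
    by (rule closed_Collect_le) (simp_all add: continuous_on_infdist[OF continuous_on_id])
  then have m2: "{x. infdist x H \<le> 1/2} \<in> sets lebesgue" using lebesgue_closedin[of UNIV] by simp
  show "normal_slab H P \<in> sets lebesgue" unfolding eq using m1 m2 by blast
qed

lemma normal_slab_integrable:
  fixes H P :: "'d::finite pt set" and \<psi> :: "'d pt \<Rightarrow> real"
  assumes aH: "affine H" and cH: "closed H" and neH: "H \<noteq> {}"
    and oP: "openin (top_of_set H) P" and bP: "bounded P" and c\<psi>: "continuous_on UNIV \<psi>"
  shows "(\<lambda>x. \<psi> (closest_point H x)) integrable_on normal_slab H P"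
proof (rule continuous_integrable_on_bounded[OF _ normal_slab_bounded_measurable[OF assms(1-5)]])
  show "continuous_on UNIV (\<lambda>x. \<psi> (closest_point H x))"
    by (rule continuous_on_compose2[OF c\<psi> continuous_closest_point_affine(2)[OF aH cH neH]]) auto
qed

lemma normal_slab_integral_zero_imp_zero:
  fixes H P :: "'d::finite pt set" and \<phi> :: "'d pt \<Rightarrow> real"
  assumes aH: "affine H" and cH: "closed H" and neH: "H \<noteq> {}"
    and oP: "openin (top_of_set H) P" and bP: "bounded P" and c\<phi>: "continuous_on UNIV \<phi>"
    and nn: "\<And>y. \<phi> y \<ge> 0" and z: "integral (normal_slab H P) (\<lambda>x. \<phi> (closest_point H x)) = 0"
    and y0: "y0 \<in> P"
  shows "\<phi> y0 = 0"
proof (rule ccontr)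
  assume "\<phi> y0 \<noteq> 0"
  then have pos: "\<phi> y0 > 0" using nn[of y0] by simp
  define F where "F = (\<lambda>x. \<phi> (closest_point H x))"
  have cF: "continuous_on UNIV F" unfolding F_def
    by (rule continuous_on_compose2[OF c\<phi> continuous_closest_point_affine(2)[OF aH cH neH]]) auto
  obtain T where T: "open T" "P = H \<inter> T" using oP unfolding openin_open by blast
  have y0H: "y0 \<in> H" using y0 T by auto
  have cy0: "closest_point H y0 = y0" by (rule closest_point_self[OF y0H])
  define Ob where "Ob = (closest_point H -` T) \<inter> {x. infdist x H < 1/2} \<inter> {x. \<phi> y0 / 2 < F x}"
  have "open (closest_point H -` T)" by (rule continuous_open_vimage[OF T(1)]) (rule continuous_closest_point_affine[OF aH cH neH])
  moreover have "open {x. infdist x H < 1/2}" by (rule open_Collect_less) (simp_all add: continuous_on_infdist[OF continuous_on_id])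
  moreover have "open {x. \<phi> y0 / 2 < F x}"
    by (rule open_Collect_less) (simp_all add: cF)
  ultimately have oO: "open Ob" unfolding Ob_def by blast
  have "y0 \<in> Ob" using y0 T cy0 pos y0H by (simp add: Ob_def F_def)
  then obtain e where e: "e > 0" "ball y0 e \<subseteq> Ob" using oO open_contains_ball by blast
  have OS: "Ob \<subseteq> normal_slab H P" using closest_point_in_set[OF cH neH] T(2) by (auto simp: Ob_def normal_slab_def)
  have bS: "ball y0 e \<subseteq> normal_slab H P" using e OS by blast
  have mb: "ball y0 e \<in> sets lebesgue" using lmeasurable_ball by (simp add: fmeasurableD)
  have iB: "F integrable_on ball y0 e" by (rule continuous_integrable_on_bounded[OF cF _ mb]) simp
  have iS: "F integrable_on normal_slab H P" unfolding F_def by (rule normal_slab_integrable[OF assms(1-6)])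
  have lm: "ball y0 e \<in> lmeasurable" by simp
  have "integral (ball y0 e) (\<lambda>x. \<phi> y0 / 2) \<le> integral (ball y0 e) F"
    by (rule integral_le[OF integrable_on_const[OF lm] iB]) (use e Ob_def in auto)
  also have "\<dots> \<le> integral (normal_slab H P) F"
    by (rule integral_subset_le[OF bS iB iS]) (simp add: F_def nn)
  also have "\<dots> = 0" using z by (simp add: F_def)
  finally have le: "integral (ball y0 e) (\<lambda>x. \<phi> y0 / 2) \<le> 0" .
  have "integral (ball y0 e) (\<lambda>x. \<phi> y0 / 2) = integral (ball y0 e) (\<lambda>x. (\<phi> y0 / 2) *\<^sub>R (1::real))" by simp
  also have "\<dots> = (\<phi> y0 / 2) * measure lebesgue (ball y0 e)"
    by (simp only: integral_cmul lmeasure_integral[OF lm]) simp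
  finally have eq: "integral (ball y0 e) (\<lambda>x. \<phi> y0 / 2) = (\<phi> y0 / 2) * measure lebesgue (ball y0 e)" .
  have "\<not> negligible (ball y0 e)" using negligible_convex_interior[of "ball y0 e"] e by simp
  then have "measure lebesgue (ball y0 e) \<noteq> 0" using negligible_iff_measure0[OF lm] by simp
  then have "measure lebesgue (ball y0 e) > 0" using measure_nonneg[of lebesgue "ball y0 e"] by linarith
  then have "(\<phi> y0 / 2) * measure lebesgue (ball y0 e) > 0" using pos by simp
  then show False using le eq by linarith
qed

definition lowdim_face_shadow :: "'d::finite pt set \<Rightarrow> 'd pt set set \<Rightarrow> 'd pt set" where
  "lowdim_face_shadow E G = {x. \<exists>E2\<in>G. \<exists>F. F face_of (E \<inter> E2) \<and> aff_dim F < int CARD('d) - 1 \<and>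
                                  closest_point (affine hull E) x \<in> F}"

lemma negligible_lowdim_face_shadow:
  fixes E :: "'d::finite pt set" and G :: "'d pt set set"
  assumes hyp: "affine hull E = {y. N \<bullet> y = c}" and N0: "N \<noteq> 0"
    and finG: "finite G" and polyE: "polytope E" and polyG: "\<And>E2. E2 \<in> G \<Longrightarrow> polytope E2"
  shows "negligible (lowdim_face_shadow E G)"
proof -
  define FF where "FF = (\<Union>E2\<in>G. {F. F face_of (E \<inter> E2) \<and> aff_dim F < int CARD('d) - 1})"
  have "finite FF" unfolding FF_def
  proof (intro finite_UN_I finG)
    fix E2 assume "E2 \<in> G"
    then have "finite {F. F face_of (E \<inter> E2)}"
      by (intro finite_polytope_faces polytope_Int polyE polyG)
    then show "finite {F. F face_of (E \<inter> E2) \<and> aff_dim F < int CARD('d) - 1}"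
      by (rule finite_subset[rotated]) auto
  qed
  moreover have "negligible {x. closest_point (affine hull E) x \<in> F}" if F: "F \<in> FF" for F
  proof -
    obtain E2 where E2: "E2 \<in> G" "F face_of (E \<inter> E2)" "aff_dim F < int CARD('d) - 1"
      using F unfolding FF_def by blast
    have "F \<subseteq> E" using face_of_imp_subset[OF E2(2)] by blast
    then have "F \<subseteq> {y. N \<bullet> y = c}" using hull_subset[of E affine] hyp by blast
    then show ?thesis unfolding hyp by (rule negligible_closest_point_vimage[OF refl N0 _ E2(3)])
  qed
  ultimately have "negligible (\<Union>F\<in>FF. {x. closest_point (affine hull E) x \<in> F})"
    by (intro negligible_Union) auto
  moreover have "lowdim_face_shadow E G = (\<Union>F\<in>FF. {x. closest_point (affine hull E) x \<in> F})"
    by (auto simp: lowdim_face_shadow_def FF_def)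
  ultimately show ?thesis by simp
qed

lemma normal_slab_diff_pieces_subset:
  fixes E :: "'d::finite pt set" and G I :: "'d pt set set"
  assumes cov: "E \<subseteq> \<Union>G" and polyE: "polytope E" and polyG: "\<And>E2. E2 \<in> G \<Longrightarrow> polytope E2"
    and adE: "aff_dim E = int CARD('d) - 1"
    and I: "I = {E2 \<in> G. aff_dim (E \<inter> E2) = int CARD('d) - 1}"
  shows "normal_slab (affine hull E) E - (\<Union>E2\<in>I. normal_slab (affine hull E) (rel_interior (E \<inter> E2)))
           \<subseteq> lowdim_face_shadow E G"
proof
  define cp where "cp = closest_point (affine hull E)"
  fix x assume x: "x \<in> normal_slab (affine hull E) E - (\<Union>E2\<in>I. normal_slab (affine hull E) (rel_interior (E \<inter> E2)))"
  then have yE: "cp x \<in> E" and inf: "infdist x (affine hull E) \<le> 1/2"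
    by (auto simp: normal_slab_def cp_def)
  obtain E2 where E2: "E2 \<in> G" "cp x \<in> E2" using cov yE by blast
  define X where "X = E \<inter> E2"
  have yX: "cp x \<in> X" using yE E2 by (simp add: X_def)
  have pX: "polytope X" unfolding X_def by (intro polytope_Int polyE polyG E2(1))
  have cX: "convex X" by (rule polytope_imp_convex[OF pX])
  have adX: "aff_dim X \<le> int CARD('d) - 1" using aff_dim_subset[of X E] adE by (auto simp: X_def)
  obtain F where F: "F face_of X" "aff_dim F < int CARD('d) - 1" "cp x \<in> F"
  proof (cases "E2 \<in> I")
    case True
    then have "cp x \<notin> rel_interior X" using x inf by (auto simp: normal_slab_def X_def cp_def)
    then have "cp x \<in> rel_frontier X" using yX closure_subset by (auto simp: rel_frontier_def)
    then obtain F where F: "F face_of X" "F \<noteq> X" "cp x \<in> F"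
      using rel_frontier_of_polyhedron_alt[OF polytope_imp_polyhedron[OF pX]] by blast
    have "aff_dim F < aff_dim X" by (rule face_of_aff_dim_lt[OF cX F(1,2)])
    then show ?thesis using that F adX by simp
  next
    case False
    then have "aff_dim X < int CARD('d) - 1" using E2(1) I adX by (auto simp: X_def)
    then show ?thesis using that face_of_refl[OF cX] yX by blast
  qed
  then show "x \<in> lowdim_face_shadow E G"
    using E2(1) by (auto simp: lowdim_face_shadow_def X_def cp_def)
qed

lemma facet_integral_decompose:
  fixes E :: "'d::finite pt set" and G I :: "'d pt set set" and g :: "'d pt \<Rightarrow> real"
  assumes hyp: "affine hull E = {y. N \<bullet> y = c}" and N0: "N \<noteq> 0"
    and finG: "finite G" and cov: "E \<subseteq> \<Union>G" and polyE: "polytope E"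
    and polyG: "\<And>E2. E2 \<in> G \<Longrightarrow> polytope E2"
    and adE: "aff_dim E = int CARD('d) - 1"
    and I: "I = {E2 \<in> G. aff_dim (E \<inter> E2) = int CARD('d) - 1}"
    and disjI: "\<And>E2 E2'. E2 \<in> I \<Longrightarrow> E2' \<in> I \<Longrightarrow> E2 \<noteq> E2' \<Longrightarrow>
                   rel_interior (E \<inter> E2) \<inter> rel_interior (E \<inter> E2') = {}"
    and intg: "\<And>E2. E2 \<in> I \<Longrightarrow> (\<lambda>x. g (closest_point (affine hull E) x)) integrable_on
                   normal_slab (affine hull E) (rel_interior (E \<inter> E2))"
  shows "facet_integral E g = (\<Sum>E2\<in>I. integral (normal_slab (affine hull E) (rel_interior (E \<inter> E2)))
                                  (\<lambda>x. g (closest_point (affine hull E) x)))"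
proof -
  define H where "H = affine hull E"
  define f where "f = (\<lambda>x. g (closest_point H x))"
  define S where "S = (\<lambda>E2. normal_slab H (rel_interior (E \<inter> E2)))"
  have hasI: "(f has_integral (\<Sum>E2\<in>I. integral (S E2) f)) (\<Union>E2\<in>I. S E2)"
  proof (rule has_integral_UN)
    show "finite I" using finG I by auto
    show "(f has_integral integral (S E2) f) (S E2)" if "E2 \<in> I" for E2
      using intg[OF that] by (simp add: S_def f_def H_def has_integral_integral)
    show "pairwise (\<lambda>i i'. negligible (S i \<inter> S i')) I"
      unfolding pairwise_def
    proof (intro ballI impI)
      fix i i' assume "i \<in> I" "i' \<in> I" "i \<noteq> i'"
      then have "S i \<inter> S i' = {}" using disjI by (auto simp: S_def normal_slab_def)
      then show "negligible (S i \<inter> S i')" by simp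
    qed
  qed
  have "(\<Union>E2\<in>I. S E2) \<subseteq> normal_slab H E"
    using rel_interior_subset by (fastforce simp: S_def normal_slab_def)
  then have empty: "{x \<in> (\<Union>E2\<in>I. S E2) - normal_slab H E. f x \<noteq> 0} = {}" by blast
  have shadow: "negligible (lowdim_face_shadow E G)"
    by (rule negligible_lowdim_face_shadow[OF hyp N0 finG polyE polyG])
  have sub: "normal_slab H E - (\<Union>E2\<in>I. S E2) \<subseteq> lowdim_face_shadow E G"
    using normal_slab_diff_pieces_subset[OF cov polyE polyG adE I] by (simp only: S_def H_def)
  have neg: "negligible {x \<in> normal_slab H E - (\<Union>E2\<in>I. S E2). f x \<noteq> 0}"
    by (rule negligible_subset[OF shadow]) (use sub in blast)
  have "(f has_integral (\<Sum>E2\<in>I. integral (S E2) f)) (normal_slab H E)"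
    by (rule has_integral_spike_set_eq[THEN iffD1, OF _ neg hasI]) (simp only: empty negligible_empty)
  then have "integral (normal_slab H E) f = (\<Sum>E2\<in>I. integral (S E2) f)" by (rule integral_unique)
  then show ?thesis unfolding facet_integral_normal_slab by (simp add: f_def H_def S_def)
qed

lemma iface_facet_props:
  fixes C :: "'d::finite pt set set"
  assumes "conforming_mesh C" "E \<in> iface_facets C \<Gamma>"
  shows "\<exists>K\<in>C. E face_of K \<and> int CARD('d) simplex K"
    and "(int CARD('d) - 1) simplex E" and "E \<subseteq> \<Gamma>"
    and "compact E" "convex E" "aff_dim E = int CARD('d) - 1" "E \<noteq> {}" "polytope E"
proof -
  from assms(2) obtain K where K: "K \<in> C" "E face_of K" and S: "(int CARD('d) - 1) simplex E" and G: "E \<subseteq> \<Gamma>"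
    unfolding iface_facets_def by auto
  moreover have "int CARD('d) simplex K" using assms(1) K(1) unfolding conforming_mesh_def by auto
  ultimately show "\<exists>K\<in>C. E face_of K \<and> int CARD('d) simplex K" by blast
  show "(int CARD('d) - 1) simplex E" "E \<subseteq> \<Gamma>" by fact+
  show "compact E" by (rule compact_simplex[OF S])
  show "convex E" by (rule convex_simplex[OF S])
  show ad: "aff_dim E = int CARD('d) - 1" by (rule aff_dim_simplex[OF S])
  show "E \<noteq> {}"
  proof
    assume "E = {}"
    then have "aff_dim E = -1" by simp
    moreover have "CARD('d) > 0" by simp
    ultimately show False using ad by simp
  qed
  show "polytope E" by (rule simplex_imp_polytope[OF S])
qed

lemma iface_facets_rel_interior_disjoint:
  fixes C :: "'d::finite pt set set"
  assumes mesh: "conforming_mesh C" and E: "E \<in> iface_facets C \<Gamma>" and E': "E' \<in> iface_facets C \<Gamma>"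
    and ne: "E \<noteq> E'"
  shows "E' \<inter> rel_interior E = {}"
proof (rule ccontr)
  assume nz: "E' \<inter> rel_interior E \<noteq> {}"
  obtain K where K: "K \<in> C" "E face_of K" using iface_facet_props(1)[OF mesh E] by blast
  obtain K' where K': "K' \<in> C" "E' face_of K'" using iface_facet_props(1)[OF mesh E'] by blast
  have KK: "(K \<inter> K') face_of K" "(K \<inter> K') face_of K'"
    using mesh K(1) K'(1) unfolding conforming_mesh_def by auto
  have E'sub: "E' \<subseteq> K'" using K'(2) face_of_imp_subset by blast
  have Esub: "E \<subseteq> K" using K(2) face_of_imp_subset by blast
  define T where "T = E' \<inter> (K \<inter> K')"
  have T1: "T face_of K'" unfolding T_def by (rule face_of_Int[OF K'(2) KK(2)])
  have T2: "T face_of (K \<inter> K')" by (rule face_of_subset[OF T1]) (auto simp: T_def)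
  have T3: "T face_of K" by (rule face_of_trans[OF T2 KK(1)])
  have "T \<inter> rel_interior E \<noteq> {}"
    using nz rel_interior_subset[of E] Esub E'sub by (auto simp: T_def)
  then have ET: "E \<subseteq> T" by (rule subset_of_face_of[OF T3 Esub])
  then have "E face_of T" using face_of_subset[OF K(2)] T3 face_of_imp_subset by blast
  moreover have "T face_of E'" by (rule face_of_subset[OF T1]) (auto simp: T_def E'sub)
  ultimately have "E face_of E'" by (rule face_of_trans)
  then have "aff_dim E < aff_dim E'"
    using face_of_aff_dim_lt[of E' E] iface_facet_props(5)[OF mesh E'] ne by auto
  then show False using iface_facet_props(6)[OF mesh E] iface_facet_props(6)[OF mesh E'] by simp
qed

lemma inter_mesh_props:
  fixes C1 C2 :: "'d::finite pt set set"
  assumes mesh1: "conforming_mesh C1" and mesh2: "conforming_mesh C2"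
    and EE: "(E1, E2) \<in> inter_mesh (iface_facets C1 \<Gamma>) (iface_facets C2 \<Gamma>)"
  shows "E1 \<in> iface_facets C1 \<Gamma>" "E2 \<in> iface_facets C2 \<Gamma>"
    "aff_dim (E1 \<inter> E2) = int CARD('d) - 1"
    "affine hull (E1 \<inter> E2) = affine hull E1" "affine hull (E1 \<inter> E2) = affine hull E2"
    "rel_interior (E1 \<inter> E2) \<subseteq> rel_interior E1" "rel_interior (E1 \<inter> E2) \<subseteq> rel_interior E2"
    "rel_interior (E1 \<inter> E2) \<noteq> {}"
proof -
  show E1: "E1 \<in> iface_facets C1 \<Gamma>" and E2: "E2 \<in> iface_facets C2 \<Gamma>"
    and ad: "aff_dim (E1 \<inter> E2) = int CARD('d) - 1"
    using EE by (auto simp: inter_mesh_def)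
  show h1: "affine hull (E1 \<inter> E2) = affine hull E1"
    using aff_dim_eq_full_gen[of "E1 \<inter> E2" E1] ad iface_facet_props(6)[OF mesh1 E1] by auto
  show h2: "affine hull (E1 \<inter> E2) = affine hull E2"
    using aff_dim_eq_full_gen[of "E1 \<inter> E2" E2] ad iface_facet_props(6)[OF mesh2 E2] by auto
  show "rel_interior (E1 \<inter> E2) \<subseteq> rel_interior E1" by (rule rel_interior_mono) (use h1 in auto)
  show "rel_interior (E1 \<inter> E2) \<subseteq> rel_interior E2" by (rule rel_interior_mono) (use h2 in auto)
  have cv: "convex (E1 \<inter> E2)" using iface_facet_props(5)[OF mesh1 E1] iface_facet_props(5)[OF mesh2 E2] by (rule convex_Int)
  have "E1 \<inter> E2 \<noteq> {}"
  proof
    assume "E1 \<inter> E2 = {}"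
    then have "aff_dim (E1 \<inter> E2) = -1" by simp
    moreover have "CARD('d) > 0" by simp
    ultimately show False using ad by simp
  qed
  then show "rel_interior (E1 \<inter> E2) \<noteq> {}" using rel_interior_eq_empty[OF cv] by simp
qed

lemma finite_iface_facets:
  fixes C :: "'d::finite pt set set"
  assumes "conforming_mesh C"
  shows "finite (iface_facets C \<Gamma>)"
proof -
  have "iface_facets C \<Gamma> \<subseteq> (\<Union>K\<in>C. {F. F face_of K})" by (auto simp: iface_facets_def)
  moreover have "finite (\<Union>K\<in>C. {F. F face_of K})"
  proof (intro finite_UN_I)
    show "finite C" using assms by (simp add: conforming_mesh_def)
    fix K assume "K \<in> C"
    then have "int CARD('d) simplex K" using assms by (simp add: conforming_mesh_def)
    then show "finite {F. F face_of K}" by (intro finite_polytope_faces simplex_imp_polytope)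
  qed
  ultimately show ?thesis by (rule finite_subset)
qed

lemma iface_facet_diameter_pos:
  fixes C :: "'d::finite pt set set"
  assumes mesh: "conforming_mesh C" and E: "E \<in> iface_facets C \<Gamma>" and dim_ge_2: "CARD('d) \<ge> 2"
  shows "diameter E > 0"
proof -
  have S: "(int CARD('d) - 1) simplex E" by (rule iface_facet_props(2)[OF mesh E])
  then obtain V where V: "finite V" "int (card V) = (int CARD('d) - 1) + 1" "E = convex hull V"
    unfolding simplex by blast
  have cV: "card V \<ge> 2" using V(2) dim_ge_2 by simp
  then have "V \<noteq> {}" by auto
  then obtain a where a: "a \<in> V" by auto
  have "card (V - {a}) \<ge> 1" using cV a V(1) by simp
  then have "V - {a} \<noteq> {}"
  proof (intro notI)
    assume "V - {a} = {}"
    then have "card (V - {a}) = 0" by (simp only: card.empty)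
    then show False using \<open>card (V - {a}) \<ge> 1\<close> by simp
  qed
  then obtain b where b: "b \<in> V - {a}" by auto
  have abE: "a \<in> E" "b \<in> E" using a b V(3) hull_subset[of V convex] by auto
  have "bounded E" using iface_facet_props(4)[OF mesh E] by (rule compact_imp_bounded)
  then have "dist a b \<le> diameter E" using abE by (rule diameter_bounded_bound)
  moreover have "dist a b > 0" using b by auto
  ultimately show ?thesis by linarith
qed

lemma iface_facet_inward_normal:
  fixes C :: "'d::finite pt set set"
  assumes mesh: "conforming_mesh C" and E: "E \<in> iface_facets C \<Gamma>"
  obtains K N c where "K \<in> C" "E \<subseteq> K" "norm N = 1" "affine hull E = {y. N \<bullet> y = c}"
    "\<And>x. x \<in> rel_interior E \<Longrightarrow> eventually (\<lambda>t. x - t *\<^sub>R N \<in> interior K) (at_right 0)"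
proof -
  obtain K where K: "K \<in> C" "E face_of K" "int CARD('d) simplex K"
    using iface_facet_props(1)[OF mesh E] by blast
  obtain N c where N: "norm N = 1" "K \<subseteq> {y. N \<bullet> y \<le> c}" "E \<subseteq> K" "affine hull E = {y. N \<bullet> y = c}"
    using simplex_facet_hyperplane[OF K(3,2) iface_facet_props(6,7)[OF mesh E]] by blast
  have "N \<noteq> 0" using N(1) by auto
  note inward = eventually_inward_interior[OF full_simplex_interior(2,1)[OF K(3)] N(3,2,4) this]
  show ?thesis by (rule that[OF K(1) N(3,1,4) inward])
qed

lemma grad_zero: "grad (\<lambda>x. 0::real) x = 0"
  by (simp add: grad_def vec_eq_iff)

lemma nderiv_zero: "nderiv1 n (\<lambda>x. 0::real) x = 0" "nderiv2 n (\<lambda>x. 0::real) x = 0"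
  by (simp_all add: nderiv1_def nderiv2_def tendsto_Lim[OF trivial_limit_at_right_real tendsto_const])

lemma Vh_zero: "(\<lambda>x. 0) \<in> Vh p C \<Gamma>"
  unfolding Vh_def using poly_fun_const[of p 0] by (auto intro: continuous_on_const)

lemma Qh_zero: "(\<lambda>x. 0) \<in> Qh p G1 G2"
  unfolding Qh_def using poly_fun_const[of p 0] by auto

definition piecewise_continuous ::
  "('d::finite pt set \<times> 'd pt set) set \<Rightarrow> ('d pt \<Rightarrow> real) \<Rightarrow> bool" where
  "piecewise_continuous T g \<longleftrightarrow>
     (\<forall>(E1, E2)\<in>T. \<exists>\<psi>. continuous_on UNIV \<psi> \<and> (\<forall>y\<in>rel_interior (E1 \<inter> E2). g y = \<psi> y))"

lemma piecewise_continuous_const: "piecewise_continuous T (\<lambda>x. c)"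
  unfolding piecewise_continuous_def by (auto intro!: exI[of _ "\<lambda>x. c"])

lemma piecewise_continuous_binop:
  fixes f g :: "'d::finite pt \<Rightarrow> real" and F :: "real \<Rightarrow> real \<Rightarrow> real"
  assumes f: "piecewise_continuous T f" and g: "piecewise_continuous T g"
    and F: "\<And>\<phi> \<psi> :: 'd pt \<Rightarrow> real. continuous_on UNIV \<phi> \<Longrightarrow> continuous_on UNIV \<psi> \<Longrightarrow>
              continuous_on UNIV (\<lambda>x. F (\<phi> x) (\<psi> x))"
  shows "piecewise_continuous T (\<lambda>x. F (f x) (g x))"
  unfolding piecewise_continuous_def
proof (intro ballI, clarify)
  fix E1 E2 assume E: "(E1, E2) \<in> T"
  obtain \<phi> where \<phi>: "continuous_on UNIV \<phi>" "\<forall>y\<in>rel_interior (E1 \<inter> E2). f y = \<phi> y"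
    using f E unfolding piecewise_continuous_def by blast
  obtain \<psi> where \<psi>: "continuous_on UNIV \<psi>" "\<forall>y\<in>rel_interior (E1 \<inter> E2). g y = \<psi> y"
    using g E unfolding piecewise_continuous_def by blast
  have "continuous_on UNIV (\<lambda>x. F (\<phi> x) (\<psi> x))" by (rule F[OF \<phi>(1) \<psi>(1)])
  then show "\<exists>\<theta>. continuous_on UNIV \<theta> \<and> (\<forall>y\<in>rel_interior (E1 \<inter> E2). F (f y) (g y) = \<theta> y)"
    using \<phi>(2) \<psi>(2) by auto
qed

lemma piecewise_continuous_add:
  "piecewise_continuous T f \<Longrightarrow> piecewise_continuous T g \<Longrightarrow> piecewise_continuous T (\<lambda>x. f x + g x)"
  by (rule piecewise_continuous_binop) (auto intro: continuous_intros)

lemma piecewise_continuous_diff: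
  "piecewise_continuous T f \<Longrightarrow> piecewise_continuous T g \<Longrightarrow> piecewise_continuous T (\<lambda>x. f x - g x)"
  by (rule piecewise_continuous_binop) (auto intro: continuous_intros)

lemma piecewise_continuous_mult:
  "piecewise_continuous T f \<Longrightarrow> piecewise_continuous T g \<Longrightarrow> piecewise_continuous T (\<lambda>x. f x * g x)"
  by (rule piecewise_continuous_binop) (auto intro: continuous_intros)

lemmas piecewise_continuous_intros =
  piecewise_continuous_const piecewise_continuous_add piecewise_continuous_diff piecewise_continuous_mult

lemma piecewise_continuous_flux_avg:
  assumes "piecewise_continuous T (nderiv1 n w1)" "piecewise_continuous T (nderiv2 n w2)"
  shows "piecewise_continuous T (flux_avg n k1 k2 h1 h2 w1 w2)"
proof -
  have eq: "flux_avg n k1 k2 h1 h2 w1 w2 = (\<lambda>x. k2 * h1 / (k2 * h1 + k1 * h2) * (k1 * nderiv1 n w1 x)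
                                     + k1 * h2 / (k2 * h1 + k1 * h2) * (k2 * nderiv2 n w2 x))"
    by (simp add: fun_eq_iff flux_avg_def)
  show ?thesis unfolding eq by (intro piecewise_continuous_intros assms)
qed

lemma piecewise_continuous_flux_jump:
  assumes "piecewise_continuous T (nderiv1 n w1)" "piecewise_continuous T (nderiv2 n w2)"
  shows "piecewise_continuous T (flux_jump n k1 k2 w1 w2)"
proof -
  have eq: "flux_jump n k1 k2 w1 w2 = (\<lambda>x. k1 * nderiv1 n w1 x - k2 * nderiv2 n w2 x)"
    by (simp add: fun_eq_iff flux_jump_def)
  show ?thesis unfolding eq by (intro piecewise_continuous_intros assms)
qed

definition piece_slab :: "'d::finite pt set \<Rightarrow> 'd pt set \<Rightarrow> 'd pt set" where
  "piece_slab E1 E2 = normal_slab (affine hull E1) (rel_interior (E1 \<inter> E2))"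

definition piece_integral :: "'d::finite pt set \<Rightarrow> 'd pt set \<Rightarrow> ('d pt \<Rightarrow> real) \<Rightarrow> real" where
  "piece_integral E1 E2 g = integral (piece_slab E1 E2) (\<lambda>x. g (closest_point (affine hull E1) x))"

lemma piece_integral_cong:
  assumes "\<And>y. y \<in> rel_interior (E1 \<inter> E2) \<Longrightarrow> f y = g y"
  shows "piece_integral E1 E2 f = piece_integral E1 E2 g"
  unfolding piece_integral_def
  by (rule integral_cong) (simp add: assms piece_slab_def normal_slab_def)

lemma piece_integral_cmult: "piece_integral E1 E2 (\<lambda>x. c * f x) = c * piece_integral E1 E2 f"
  by (simp add: piece_integral_def)

section \<open>Algebraic identities of the weights\<close>

lemma nitsche_weight_relations:
  fixes \<alpha> k1 k2 h1 h2 :: real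
  assumes "\<alpha> \<noteq> 0" "k1 \<noteq> 0" "k2 \<noteq> 0" "k2 * h1 + k1 * h2 \<noteq> 0"
  defines "S \<equiv> k2 * h1 + k1 * h2"
  shows "k2 * h1 / S + k1 * h2 / S = 1"
    and "\<alpha> * (h1 / k1) * (inverse \<alpha> * k1 * k2 / S) = k2 * h1 / S"
    and "\<alpha> * (h2 / k2) * (inverse \<alpha> * k1 * k2 / S) = k1 * h2 / S"
    and "\<alpha> * (h1 / k1) * (k1 * h2 / S) = \<alpha> * h1 * h2 / S"
    and "\<alpha> * (h2 / k2) * (k2 * h1 / S) = \<alpha> * h1 * h2 / S"
proof -
  have S: "S \<noteq> 0" using assms(4) by (simp add: S_def)
  then show "k2 * h1 / S + k1 * h2 / S = 1" by (simp add: S_def add_divide_distrib[symmetric])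
  show "\<alpha> * (h1 / k1) * (inverse \<alpha> * k1 * k2 / S) = k2 * h1 / S"
    "\<alpha> * (h2 / k2) * (inverse \<alpha> * k1 * k2 / S) = k1 * h2 / S"
    "\<alpha> * (h1 / k1) * (k1 * h2 / S) = \<alpha> * h1 * h2 / S"
    "\<alpha> * (h2 / k2) * (k2 * h1 / S) = \<alpha> * h1 * h2 / S"
    using assms(1-3) S by (simp_all add: field_simps)
qed

lemma flux_residual_identity:
  fixes \<alpha> c1 c2 w1 w2 \<beta> a b l r1 r2 :: real
  assumes "w1 + w2 = 1" "\<alpha> * c1 * \<beta> = w1" "\<alpha> * c2 * \<beta> = w2"
  shows "(a - b) + \<alpha> * (c1 * (l - r1) + c2 * (l - r2))
       = \<alpha> * (c1 + c2) * (l - (w1 * r1 + w2 * r2 - \<beta> * (a - b)))"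
proof -
  have one: "\<alpha> * (c1 + c2) * \<beta> = 1" using assms by (simp add: algebra_simps)
  have w: "\<alpha> * (c1 + c2) * w1 = \<alpha> * c1" "\<alpha> * (c1 + c2) * w2 = \<alpha> * c2"
    using one unfolding assms(2,3)[symmetric] by (simp_all add: ac_simps)
  have "\<alpha> * (c1 + c2) * (l - (w1 * r1 + w2 * r2 - \<beta> * (a - b)))
      = \<alpha> * (c1 + c2) * l - (\<alpha> * (c1 + c2) * w1) * r1 - (\<alpha> * (c1 + c2) * w2) * r2
        + (\<alpha> * (c1 + c2) * \<beta>) * (a - b)"
    by (simp add: algebra_simps)
  also have "\<dots> = \<alpha> * (c1 + c2) * l - \<alpha> * c1 * r1 - \<alpha> * c2 * r2 + (a - b)"
    unfolding w one by simp
  finally show ?thesis by (simp add: algebra_simps)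
qed

lemma consistency_identity:
  fixes \<alpha> c1 c2 w1 w2 \<beta> \<gamma> ju jv au bu av bv :: real
  assumes "w1 + w2 = 1" "\<alpha> * c1 * \<beta> = w1" "\<alpha> * c2 * \<beta> = w2" "\<alpha> * c1 * w2 = \<gamma>" "\<alpha> * c2 * w1 = \<gamma>"
  defines "l \<equiv> w1 * au + w2 * bu - \<beta> * ju"
  shows "\<beta> * ju * jv - \<gamma> * (au - bu) * (av - bv) - (w1 * au + w2 * bu) * jv - ju * (w1 * av + w2 * bv)
       = - (jv * l + \<alpha> * (c1 * ((l - au) * (0 - av)) + c2 * ((l - bu) * (0 - bv))))"
proof -
  have "l - au = l - (w1 + w2) * au" "l - bu = l - (w1 + w2) * bu" using assms(1) by simp_all
  then have la: "l - au = w2 * (bu - au) - \<beta> * ju" "l - bu = w1 * (au - bu) - \<beta> * ju"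
    unfolding l_def by (simp_all add: algebra_simps)
  have "\<alpha> * (c1 * ((l - au) * (0 - av)) + c2 * ((l - bu) * (0 - bv)))
      = (\<alpha> * c1 * w2) * (au - bu) * av + (\<alpha> * c1 * \<beta>) * ju * av
        - (\<alpha> * c2 * w1) * (au - bu) * bv + (\<alpha> * c2 * \<beta>) * ju * bv"
    unfolding la by (simp add: algebra_simps)
  also have "\<dots> = \<gamma> * (au - bu) * (av - bv) + ju * (w1 * av + w2 * bv)"
    unfolding assms(2-5) by (simp add: algebra_simps)
  finally show ?thesis unfolding l_def by (simp add: algebra_simps)
qed

locale interface_meshes =
  fixes C1 C2 :: "('d::finite pt) set set" and \<Gamma> :: "'d pt set" and n :: "'d pt \<Rightarrow> 'd pt"
  assumes dim: "CARD('d) \<ge> 2"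
    and mesh1: "conforming_mesh C1" and mesh2: "conforming_mesh C2"
    and disj: "mesh_domain C1 \<inter> mesh_domain C2 = {}"
    and cover1: "\<Union>(iface_facets C1 \<Gamma>) = \<Gamma>"
    and cover2: "\<Union>(iface_facets C2 \<Gamma>) = \<Gamma>"
    and normal: "is_iface_normal C1 C2 \<Gamma> n"
begin

abbreviation pieces :: "('d pt set \<times> 'd pt set) set" where
  "pieces \<equiv> inter_mesh (iface_facets C1 \<Gamma>) (iface_facets C2 \<Gamma>)"

lemma finite_iface_facets1: "finite (iface_facets C1 \<Gamma>)" by (rule finite_iface_facets[OF mesh1])

lemma finite_iface_facets2: "finite (iface_facets C2 \<Gamma>)" by (rule finite_iface_facets[OF mesh2])

lemma finite_pieces: "finite pieces"
proof -
  have "pieces \<subseteq> iface_facets C1 \<Gamma> \<times> iface_facets C2 \<Gamma>"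
    by (auto simp: inter_mesh_def)
  then show ?thesis by (rule finite_subset) (simp add: finite_iface_facets1 finite_iface_facets2)
qed

lemma piece_rel_interior_disjoint1:
  assumes EE: "(E1, E2) \<in> pieces"
    and E: "E \<in> iface_facets C1 \<Gamma>" and ne: "E \<noteq> E1"
  shows "E \<inter> rel_interior (E1 \<inter> E2) = {}"
proof -
  note pp = inter_mesh_props[OF mesh1 mesh2 EE]
  have "E \<inter> rel_interior E1 = {}" by (rule iface_facets_rel_interior_disjoint[OF mesh1 pp(1) E ne[symmetric]])
  then show ?thesis using pp(6) by blast
qed

lemma piece_rel_interior_disjoint2:
  assumes EE: "(E1, E2) \<in> pieces"
    and E: "E \<in> iface_facets C2 \<Gamma>" and ne: "E \<noteq> E2"
  shows "E \<inter> rel_interior (E1 \<inter> E2) = {}"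
proof -
  note pp = inter_mesh_props[OF mesh1 mesh2 EE]
  have "E \<inter> rel_interior E2 = {}" by (rule iface_facets_rel_interior_disjoint[OF mesh2 pp(2) E ne[symmetric]])
  then show ?thesis using pp(7) by blast
qed

lemma piece_Int_rel_interior_disjoint:
  assumes EE: "(E1, E2) \<in> pieces"
    and EE': "(E1', E2') \<in> pieces"
    and ne: "(E1', E2') \<noteq> (E1, E2)"
  shows "(E1' \<inter> E2') \<inter> rel_interior (E1 \<inter> E2) = {}"
proof (cases "E1' = E1")
  case True
  then have "E2' \<noteq> E2" using ne by auto
  then have "E2' \<inter> rel_interior (E1 \<inter> E2) = {}"
    by (rule piece_rel_interior_disjoint2[OF EE inter_mesh_props(2)[OF mesh1 mesh2 EE']])
  then show ?thesis by blast
next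
  case False
  then have "E1' \<inter> rel_interior (E1 \<inter> E2) = {}"
    by (rule piece_rel_interior_disjoint1[OF EE inter_mesh_props(1)[OF mesh1 mesh2 EE']])
  then show ?thesis by blast
qed

lemma pieces_rel_interiors_disjoint:
  assumes "(E1, E2) \<in> pieces" "(E1', E2') \<in> pieces" "(E1', E2') \<noteq> (E1, E2)"
  shows "rel_interior (E1' \<inter> E2') \<inter> rel_interior (E1 \<inter> E2) = {}"
  using piece_Int_rel_interior_disjoint[OF assms] rel_interior_subset[of "E1' \<inter> E2'"] by blast

lemma piece_geometry:
  assumes EE: "(E1, E2) \<in> pieces"
  shows "affine (affine hull E1)" "closed (affine hull E1)" "affine hull E1 \<noteq> {}"
    "openin (top_of_set (affine hull E1)) (rel_interior (E1 \<inter> E2))"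
    "bounded (rel_interior (E1 \<inter> E2))" "rel_interior (E1 \<inter> E2) \<subseteq> E1 \<inter> E2"
    "affine hull (E1 \<inter> E2) = affine hull E1" "affine hull E2 = affine hull E1"
    "\<exists>N c. N \<noteq> 0 \<and> affine hull E1 = {y. N \<bullet> y = c}"
proof -
  note pp = inter_mesh_props[OF mesh1 mesh2 EE]
  show "affine (affine hull E1)" by simp
  show "closed (affine hull E1)" by (rule closed_affine_hull)
  show "affine hull E1 \<noteq> {}" using iface_facet_props(7)[OF mesh1 pp(1)] by simp
  show "openin (top_of_set (affine hull E1)) (rel_interior (E1 \<inter> E2))"
    using openin_rel_interior[of "E1 \<inter> E2"] pp(4) by simp
  show "rel_interior (E1 \<inter> E2) \<subseteq> E1 \<inter> E2" by (rule rel_interior_subset)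
  have "bounded E1" using compact_imp_bounded[OF iface_facet_props(4)[OF mesh1 pp(1)]] .
  then show "bounded (rel_interior (E1 \<inter> E2))"
    by (rule bounded_subset) (use \<open>rel_interior (E1 \<inter> E2) \<subseteq> E1 \<inter> E2\<close> in blast)
  show "affine hull (E1 \<inter> E2) = affine hull E1" by (rule pp(4))
  show "affine hull E2 = affine hull E1" using pp(4,5) by simp
  have "aff_dim E1 = DIM('d pt) - 1" using iface_facet_props(6)[OF mesh1 pp(1)] by simp
  then show "\<exists>N c. N \<noteq> 0 \<and> affine hull E1 = {y. N \<bullet> y = c}" by (rule aff_dim_eq_hyperplane[THEN iffD1])
qed

lemma piece_diameters_pos:
  assumes "(E1, E2) \<in> pieces"
  shows "diameter E1 > 0" "diameter E2 > 0"
  using iface_facet_diameter_pos[OF mesh1 _ dim] iface_facet_diameter_pos[OF mesh2 _ dim]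
    inter_mesh_props(1,2)[OF mesh1 mesh2 assms] by auto

lemma no_common_inward_direction:
  assumes "eventually (\<lambda>t. x - t *\<^sub>R v \<in> mesh_domain C1) (at_right 0)"
    and "eventually (\<lambda>t. x - t *\<^sub>R v \<in> mesh_domain C2) (at_right 0)"
  shows False
proof -
  have "eventually (\<lambda>t::real. False) (at_right 0)"
    using eventually_conj[OF assms] by (rule eventually_mono) (use disj in blast)
  then show False by simp
qed

lemma interface_normal_on_piece:
  assumes EE: "(E1, E2) \<in> pieces"
  shows "\<exists>N K1 K2. K1 \<in> C1 \<and> E1 \<subseteq> K1 \<and> K2 \<in> C2 \<and> E2 \<subseteq> K2 \<and>
     (\<forall>x\<in>rel_interior (E1 \<inter> E2). n x = N \<and> eventually (\<lambda>t. x - t *\<^sub>R N \<in> K1) (at_right 0)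
          \<and> eventually (\<lambda>t. x + t *\<^sub>R N \<in> K2) (at_right 0))"
proof -
  note pp = inter_mesh_props[OF mesh1 mesh2 EE]
  obtain K1 N1 c1 where K1: "K1 \<in> C1" "E1 \<subseteq> K1"
    and N1: "norm N1 = 1" "affine hull E1 = {y. N1 \<bullet> y = c1}"
    and in1: "\<And>x. x \<in> rel_interior E1 \<Longrightarrow> eventually (\<lambda>t. x - t *\<^sub>R N1 \<in> interior K1) (at_right 0)"
    by (rule iface_facet_inward_normal[OF mesh1 pp(1)]) blast
  obtain K2 N2 c2 where K2: "K2 \<in> C2" "E2 \<subseteq> K2"
    and N2: "norm N2 = 1" "affine hull E2 = {y. N2 \<bullet> y = c2}"
    and in2: "\<And>x. x \<in> rel_interior E2 \<Longrightarrow> eventually (\<lambda>t. x - t *\<^sub>R N2 \<in> interior K2) (at_right 0)"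
    by (rule iface_facet_inward_normal[OF mesh2 pp(2)]) blast
  have E1: "E1 \<noteq> {}" by (rule iface_facet_props(7)[OF mesh1 pp(1)])
  have "affine hull E1 = {y. N2 \<bullet> y = c2}" using pp(4,5) N2(2) by simp
  then have N2_cases: "N2 = N1 \<or> N2 = - N1"
    by (intro unit_orthogonal_to_facet[OF N1(2,1) E1 N2(1)] hyperplane_normal_orthogonal)
  have K_dom: "interior K1 \<subseteq> mesh_domain C1" "interior K2 \<subseteq> mesh_domain C2"
    unfolding mesh_domain_def using K1(1) K2(1) by (auto intro!: interior_mono)
  have "n x = N1 \<and> eventually (\<lambda>t. x - t *\<^sub>R N1 \<in> K1) (at_right 0)
          \<and> eventually (\<lambda>t. x + t *\<^sub>R N1 \<in> K2) (at_right 0)"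
    if x: "x \<in> rel_interior (E1 \<inter> E2)" for x
  proof -
    have x1: "x \<in> rel_interior E1" and x2: "x \<in> rel_interior E2" using x pp(6,7) by auto
    have dom1: "eventually (\<lambda>t. x - t *\<^sub>R N1 \<in> mesh_domain C1) (at_right 0)"
      using in1[OF x1] by (rule eventually_mono) (use K_dom in blast)
    have dom2: "eventually (\<lambda>t. x - t *\<^sub>R N2 \<in> mesh_domain C2) (at_right 0)"
      using in2[OF x2] by (rule eventually_mono) (use K_dom in blast)
    have "n x = N1 \<or> n x = - N1"
      by (rule unit_orthogonal_to_facet[OF N1(2,1) E1]) (use normal pp(1) x1 in \<open>auto simp: is_iface_normal_def\<close>)
    moreover have "eventually (\<lambda>t. x + t *\<^sub>R n x \<in> mesh_domain C2) (at_right 0)"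
      using normal pp(2) x2 unfolding is_iface_normal_def by blast
    ultimately have nx: "n x = N1"
      using no_common_inward_direction[OF dom1] by auto
    have N2: "N2 = - N1" using N2_cases no_common_inward_direction[OF dom1] dom2 by auto
    have "eventually (\<lambda>t. x - t *\<^sub>R N1 \<in> K1) (at_right 0)"
      using in1[OF x1] by (rule eventually_mono) (use interior_subset in blast)
    moreover have "eventually (\<lambda>t. x + t *\<^sub>R N1 \<in> K2) (at_right 0)"
      using in2[OF x2] unfolding N2 by (rule eventually_mono) (use interior_subset in auto)
    ultimately show ?thesis using nx by blast
  qed
  then show ?thesis using K1 K2 by blast
qed

lemma Vh1_poly_on_piece:
  assumes EE: "(E1, E2) \<in> pieces" and w: "w \<in> Vh p C1 \<Gamma>"
  shows "\<exists>q r. poly_fun p q \<and> poly_fun p r \<and> (\<forall>x\<in>rel_interior (E1 \<inter> E2). w x = q x \<and> nderiv1 n w x = r x)"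
proof -
  obtain N K1 K2 where NK: "K1 \<in> C1" "E1 \<subseteq> K1"
    and nx: "\<forall>x\<in>rel_interior (E1 \<inter> E2). n x = N \<and> eventually (\<lambda>t. x - t *\<^sub>R N \<in> K1) (at_right 0)"
    using interface_normal_on_piece[OF EE] by blast
  obtain q where q: "poly_fun p q" "\<forall>x\<in>K1. w x = q x" using w NK(1) unfolding Vh_def by blast
  obtain r where r: "poly_fun p r" "\<And>x. ((\<lambda>s. q (x + s *\<^sub>R N)) has_field_derivative r x) (at 0)"
    using poly_fun_line_deriv[OF q(1), of N] by blast
  have "w x = q x \<and> nderiv1 n w x = r x" if x: "x \<in> rel_interior (E1 \<inter> E2)" for x
  proof -
    have xK: "x \<in> K1" using x rel_interior_subset NK(2) by blast
    have nN: "n x = N" and ev: "eventually (\<lambda>t. x - t *\<^sub>R N \<in> K1) (at_right 0)" using nx x by auto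
    have "nderiv1 n w x = r x"
      unfolding nderiv1_def
    proof (rule Lim_at_right_eventually_eq)
      show "eventually (\<lambda>t. (w x - w (x - t *\<^sub>R n x)) / t = (q x - q (x - t *\<^sub>R N)) / t) (at_right 0)"
        using ev by eventually_elim (use xK q(2) nN in auto)
      show "((\<lambda>t. (q x - q (x - t *\<^sub>R N)) / t) \<longlongrightarrow> r x) (at_right 0)" by (rule backward_quotient_tendsto[OF r(2)])
    qed
    then show ?thesis using xK q(2) by auto
  qed
  then show ?thesis using q(1) r(1) by blast
qed

lemma Vh2_poly_on_piece:
  assumes EE: "(E1, E2) \<in> pieces" and w: "w \<in> Vh p C2 \<Gamma>"
  shows "\<exists>q r. poly_fun p q \<and> poly_fun p r \<and> (\<forall>x\<in>rel_interior (E1 \<inter> E2). w x = q x \<and> nderiv2 n w x = r x)"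
proof -
  obtain N K1 K2 where NK: "K2 \<in> C2" "E2 \<subseteq> K2"
    and nx: "\<forall>x\<in>rel_interior (E1 \<inter> E2). n x = N \<and> eventually (\<lambda>t. x + t *\<^sub>R N \<in> K2) (at_right 0)"
    using interface_normal_on_piece[OF EE] by blast
  obtain q where q: "poly_fun p q" "\<forall>x\<in>K2. w x = q x" using w NK(1) unfolding Vh_def by blast
  obtain r where r: "poly_fun p r" "\<And>x. ((\<lambda>s. q (x + s *\<^sub>R N)) has_field_derivative r x) (at 0)"
    using poly_fun_line_deriv[OF q(1), of N] by blast
  have "w x = q x \<and> nderiv2 n w x = r x" if x: "x \<in> rel_interior (E1 \<inter> E2)" for x
  proof -
    have xK: "x \<in> K2" using x rel_interior_subset NK(2) by blast
    have nN: "n x = N" and ev: "eventually (\<lambda>t. x + t *\<^sub>R N \<in> K2) (at_right 0)" using nx x by auto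
    have "nderiv2 n w x = r x"
      unfolding nderiv2_def
    proof (rule Lim_at_right_eventually_eq)
      show "eventually (\<lambda>t. (w (x + t *\<^sub>R n x) - w x) / t = (q (x + t *\<^sub>R N) - q x) / t) (at_right 0)"
        using ev by eventually_elim (use xK q(2) nN in auto)
      show "((\<lambda>t. (q (x + t *\<^sub>R N) - q x) / t) \<longlongrightarrow> r x) (at_right 0)" by (rule forward_quotient_tendsto[OF r(2)])
    qed
    then show ?thesis using xK q(2) by auto
  qed
  then show ?thesis using q(1) r(1) by blast
qed

lemma piece_integral_has_integral:
  assumes EE: "(E1, E2) \<in> pieces" and g: "piecewise_continuous pieces g"
  shows "((\<lambda>x. g (closest_point (affine hull E1) x)) has_integral piece_integral E1 E2 g)
           (piece_slab E1 E2)"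
proof -
  obtain \<psi> where \<psi>: "continuous_on UNIV \<psi>" "\<forall>y\<in>rel_interior (E1 \<inter> E2). g y = \<psi> y"
    using g EE unfolding piecewise_continuous_def by blast
  have "(\<lambda>x. \<psi> (closest_point (affine hull E1) x)) integrable_on piece_slab E1 E2"
    unfolding piece_slab_def by (rule normal_slab_integrable[OF piece_geometry(1-5)[OF EE] \<psi>(1)])
  then have "(\<lambda>x. g (closest_point (affine hull E1) x)) integrable_on piece_slab E1 E2"
    by (rule integrable_eq) (use \<psi>(2) in \<open>auto simp: piece_slab_def normal_slab_def\<close>)
  then show ?thesis unfolding piece_integral_def by (rule integrable_integral)
qed

lemma piece_integral_add:
  assumes "(E1, E2) \<in> pieces" "piecewise_continuous pieces f" "piecewise_continuous pieces g"
  shows "piece_integral E1 E2 (\<lambda>x. f x + g x) = piece_integral E1 E2 f + piece_integral E1 E2 g"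
  using has_integral_add[OF piece_integral_has_integral[OF assms(1,2)] piece_integral_has_integral[OF assms(1,3)]]
  unfolding piece_integral_def by (rule integral_unique)

lemma piece_integral_diff:
  assumes "(E1, E2) \<in> pieces" "piecewise_continuous pieces f" "piecewise_continuous pieces g"
  shows "piece_integral E1 E2 (\<lambda>x. f x - g x) = piece_integral E1 E2 f - piece_integral E1 E2 g"
  using has_integral_diff[OF piece_integral_has_integral[OF assms(1,2)] piece_integral_has_integral[OF assms(1,3)]]
  unfolding piece_integral_def by (rule integral_unique)

lemma piece_integral_square_eq_0:
  assumes EE: "(E1, E2) \<in> pieces" and \<psi>: "continuous_on UNIV \<psi>"
    and zero: "piece_integral E1 E2 (\<lambda>y. \<psi> y * \<psi> y) = 0" and x: "x \<in> rel_interior (E1 \<inter> E2)"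
  shows "\<psi> x = 0"
proof -
  have "\<psi> x * \<psi> x = 0"
    by (rule normal_slab_integral_zero_imp_zero[where \<phi>="\<lambda>y. \<psi> y * \<psi> y", OF piece_geometry(1-5)[OF EE] _ _ _ x])
       (use zero in \<open>auto intro: continuous_intros \<psi> simp: piece_integral_def piece_slab_def\<close>)
  then show ?thesis by simp
qed

lemma facet_integral_piece:
  assumes EE: "(E1, E2) \<in> pieces" and g: "piecewise_continuous pieces g"
  shows "facet_integral (E1 \<inter> E2) g = piece_integral E1 E2 g"
proof -
  note pp = inter_mesh_props[OF mesh1 mesh2 EE]
  note pg = piece_geometry[OF EE]
  define X where "X = E1 \<inter> E2"
  obtain N c where Nc: "N \<noteq> 0" "affine hull E1 = {y. N \<bullet> y = c}" using pg(9) by blast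
  have hX: "affine hull X = affine hull E1" using pg(7) by (simp add: X_def)
  have pX: "polytope X" unfolding X_def
    by (intro polytope_Int iface_facet_props(8)[OF mesh1 pp(1)] iface_facet_props(8)[OF mesh2 pp(2)])
  have I: "{X} = {E2' \<in> {X}. aff_dim (X \<inter> E2') = int CARD('d) - 1}" using pp(3) by (auto simp: X_def)
  have "facet_integral X g = (\<Sum>E2'\<in>{X}. integral (normal_slab (affine hull X) (rel_interior (X \<inter> E2')))
                                  (\<lambda>x. g (closest_point (affine hull X) x)))"
  proof (rule facet_integral_decompose[OF _ Nc(1) _ _ pX _ _ I])
    show "affine hull X = {y. N \<bullet> y = c}" using hX Nc(2) by simp
    show "aff_dim X = int CARD('d) - 1" using pp(3) by (simp add: X_def)
    show "(\<lambda>x. g (closest_point (affine hull X) x)) integrable_on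
            normal_slab (affine hull X) (rel_interior (X \<inter> E2'))" if "E2' \<in> {X}" for E2'
      using that piece_integral_has_integral[OF EE g] hX by (auto simp: piece_slab_def X_def)
  qed (use pX in auto)
  then show ?thesis unfolding X_def using pg(7) by (simp add: piece_integral_def piece_slab_def)
qed

lemma poly_on_pieces_imp_piecewise_continuous:
  assumes "\<And>E1 E2. (E1, E2) \<in> pieces \<Longrightarrow>
             \<exists>q. poly_fun p q \<and> (\<forall>y\<in>rel_interior (E1 \<inter> E2). g y = q y)"
  shows "piecewise_continuous pieces g"
  unfolding piecewise_continuous_def
proof (intro ballI, clarify)
  fix E1 E2 assume "(E1, E2) \<in> pieces"
  then obtain q where "poly_fun p q" "\<forall>y\<in>rel_interior (E1 \<inter> E2). g y = q y"
    using assms by blast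
  then show "\<exists>\<psi>. continuous_on UNIV \<psi> \<and> (\<forall>y\<in>rel_interior (E1 \<inter> E2). g y = \<psi> y)"
    using poly_fun_continuous_on by blast
qed

lemma Vh1_piecewise_continuous:
  assumes w: "w \<in> Vh p C1 \<Gamma>"
  shows "piecewise_continuous pieces w" "piecewise_continuous pieces (nderiv1 n w)"
proof -
  have "(\<exists>q. poly_fun p q \<and> (\<forall>y\<in>rel_interior (E1 \<inter> E2). w y = q y)) \<and>
        (\<exists>r. poly_fun p r \<and> (\<forall>y\<in>rel_interior (E1 \<inter> E2). nderiv1 n w y = r y))"
    if "(E1, E2) \<in> pieces" for E1 E2
    using Vh1_poly_on_piece[OF that w] by blast
  note poly = this
  show "piecewise_continuous pieces w"
    by (rule poly_on_pieces_imp_piecewise_continuous) (use poly in blast)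
  show "piecewise_continuous pieces (nderiv1 n w)"
    by (rule poly_on_pieces_imp_piecewise_continuous) (use poly in blast)
qed

lemma Vh2_piecewise_continuous:
  assumes w: "w \<in> Vh p C2 \<Gamma>"
  shows "piecewise_continuous pieces w" "piecewise_continuous pieces (nderiv2 n w)"
proof -
  have "(\<exists>q. poly_fun p q \<and> (\<forall>y\<in>rel_interior (E1 \<inter> E2). w y = q y)) \<and>
        (\<exists>r. poly_fun p r \<and> (\<forall>y\<in>rel_interior (E1 \<inter> E2). nderiv2 n w y = r y))"
    if "(E1, E2) \<in> pieces" for E1 E2
    using Vh2_poly_on_piece[OF that w] by blast
  note poly = this
  show "piecewise_continuous pieces w"
    by (rule poly_on_pieces_imp_piecewise_continuous) (use poly in blast)
  show "piecewise_continuous pieces (nderiv2 n w)"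
    by (rule poly_on_pieces_imp_piecewise_continuous) (use poly in blast)
qed

lemma Qh_piecewise_continuous:
  assumes "\<mu> \<in> Qh p (iface_facets C1 \<Gamma>) (iface_facets C2 \<Gamma>)"
  shows "piecewise_continuous pieces \<mu>"
  by (rule poly_on_pieces_imp_piecewise_continuous) (use assms in \<open>auto simp: Qh_def\<close>)

lemma Qh_restrict_to_piece:
  assumes EE: "(E1, E2) \<in> pieces"
    and q: "poly_fun p q" "\<forall>y\<in>rel_interior (E1 \<inter> E2). g y = q y"
  shows "(\<lambda>y. if y \<in> rel_interior (E1 \<inter> E2) then g y else 0)
           \<in> Qh p (iface_facets C1 \<Gamma>) (iface_facets C2 \<Gamma>)"
  unfolding Qh_def
proof (intro CollectI ballI, clarify)
  fix E1' E2' assume EE': "(E1', E2') \<in> pieces"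
  show "\<exists>q'. poly_fun p q' \<and> (\<forall>y\<in>rel_interior (E1' \<inter> E2').
           (if y \<in> rel_interior (E1 \<inter> E2) then g y else 0) = q' y)"
  proof (cases "(E1', E2') = (E1, E2)")
    case True
    then show ?thesis using q by auto
  next
    case False
    then have "rel_interior (E1' \<inter> E2') \<inter> rel_interior (E1 \<inter> E2) = {}"
      by (rule pieces_rel_interiors_disjoint[OF EE EE'])
    then show ?thesis using poly_fun_const[of p 0] by (intro exI[of _ "\<lambda>y. 0"]) auto
  qed
qed

lemma facet_integral_iface_facet1:
  assumes E: "E \<in> iface_facets C1 \<Gamma>" and g: "piecewise_continuous pieces g"
  shows "facet_integral E g = (\<Sum>(E1, E2)\<in>{pr \<in> pieces. fst pr = E}. piece_integral E1 E2 g)"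
proof -
  define I where "I = {E2 \<in> iface_facets C2 \<Gamma>. aff_dim (E \<inter> E2) = int CARD('d) - 1}"
  have IM: "(E, E2) \<in> pieces \<longleftrightarrow> E2 \<in> I" for E2
    using E by (auto simp: I_def inter_mesh_def)
  have "aff_dim E = DIM('d pt) - 1" using iface_facet_props(6)[OF mesh1 E] by simp
  then obtain N c where Nc: "N \<noteq> 0" "affine hull E = {y. N \<bullet> y = c}"
    using aff_dim_eq_hyperplane[THEN iffD1] by blast
  have "facet_integral E g = (\<Sum>E2\<in>I. integral (normal_slab (affine hull E) (rel_interior (E \<inter> E2)))
                                  (\<lambda>x. g (closest_point (affine hull E) x)))"
  proof (rule facet_integral_decompose[OF Nc(2) Nc(1) finite_iface_facets2 _
          iface_facet_props(8)[OF mesh1 E] _ iface_facet_props(6)[OF mesh1 E] I_def])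
    show "E \<subseteq> \<Union> (iface_facets C2 \<Gamma>)" using iface_facet_props(3)[OF mesh1 E] cover2 by simp
    show "polytope E2" if "E2 \<in> iface_facets C2 \<Gamma>" for E2 by (rule iface_facet_props(8)[OF mesh2 that])
    show "rel_interior (E \<inter> E2) \<inter> rel_interior (E \<inter> E2') = {}"
      if "E2 \<in> I" "E2' \<in> I" "E2 \<noteq> E2'" for E2 E2'
      using pieces_rel_interiors_disjoint[of E E2 E E2'] that unfolding IM by (simp add: Int_commute)
    show "(\<lambda>x. g (closest_point (affine hull E) x)) integrable_on
            normal_slab (affine hull E) (rel_interior (E \<inter> E2))" if "E2 \<in> I" for E2
      using piece_integral_has_integral[OF _ g, of E E2] IM[of E2] that by (auto simp: piece_slab_def)
  qed
  also have "\<dots> = (\<Sum>E2\<in>I. piece_integral E E2 g)" by (simp add: piece_integral_def piece_slab_def)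
  also have "\<dots> = (\<Sum>(E1, E2)\<in>(\<lambda>E2. (E, E2)) ` I. piece_integral E1 E2 g)"
    by (subst sum.reindex) (auto simp: inj_on_def)
  also have "(\<lambda>E2. (E, E2)) ` I = {pr \<in> pieces. fst pr = E}"
    using IM by force
  finally show ?thesis .
qed

lemma facet_integral_iface_facet2:
  assumes E: "E \<in> iface_facets C2 \<Gamma>" and g: "piecewise_continuous pieces g"
  shows "facet_integral E g = (\<Sum>(E1, E2)\<in>{pr \<in> pieces. snd pr = E}. piece_integral E1 E2 g)"
proof -
  define I where "I = {E1 \<in> iface_facets C1 \<Gamma>. aff_dim (E \<inter> E1) = int CARD('d) - 1}"
  have IM: "(E1, E) \<in> pieces \<longleftrightarrow> E1 \<in> I" for E1
    using E by (auto simp: I_def inter_mesh_def Int_commute)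
  have "aff_dim E = DIM('d pt) - 1" using iface_facet_props(6)[OF mesh2 E] by simp
  then obtain N c where Nc: "N \<noteq> 0" "affine hull E = {y. N \<bullet> y = c}"
    using aff_dim_eq_hyperplane[THEN iffD1] by blast
  have hull: "affine hull E = affine hull E1" if "E1 \<in> I" for E1
    using piece_geometry(8)[of E1 E] IM[of E1] that by simp
  have "facet_integral E g = (\<Sum>E1\<in>I. integral (normal_slab (affine hull E) (rel_interior (E \<inter> E1)))
                                  (\<lambda>x. g (closest_point (affine hull E) x)))"
  proof (rule facet_integral_decompose[OF Nc(2) Nc(1) finite_iface_facets1 _
          iface_facet_props(8)[OF mesh2 E] _ iface_facet_props(6)[OF mesh2 E] I_def])
    show "E \<subseteq> \<Union> (iface_facets C1 \<Gamma>)" using iface_facet_props(3)[OF mesh2 E] cover1 by simp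
    show "polytope E1" if "E1 \<in> iface_facets C1 \<Gamma>" for E1 by (rule iface_facet_props(8)[OF mesh1 that])
    show "rel_interior (E \<inter> E1) \<inter> rel_interior (E \<inter> E1') = {}"
      if "E1 \<in> I" "E1' \<in> I" "E1 \<noteq> E1'" for E1 E1'
      using pieces_rel_interiors_disjoint[of E1 E E1' E] that unfolding IM by (simp add: Int_commute)
    show "(\<lambda>x. g (closest_point (affine hull E) x)) integrable_on
            normal_slab (affine hull E) (rel_interior (E \<inter> E1))" if "E1 \<in> I" for E1
      using piece_integral_has_integral[OF _ g, of E1 E] IM[of E1] that hull[OF that]
      by (auto simp: piece_slab_def Int_commute)
  qed
  also have "\<dots> = (\<Sum>E1\<in>I. piece_integral E1 E g)"
    by (rule sum.cong[OF refl]) (simp add: piece_integral_def piece_slab_def hull Int_commute)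
  also have "\<dots> = (\<Sum>(E1, E2)\<in>(\<lambda>E1. (E1, E)) ` I. piece_integral E1 E2 g)"
    by (subst sum.reindex) (auto simp: inj_on_def)
  also have "(\<lambda>E1. (E1, E)) ` I = {pr \<in> pieces. snd pr = E}"
    using IM by force
  finally show ?thesis .
qed

lemma iface_int_piece_sum:
  assumes "piecewise_continuous pieces g"
  shows "iface_int (iface_facets C1 \<Gamma>) (iface_facets C2 \<Gamma>) g
           = (\<Sum>(E1, E2)\<in>pieces. piece_integral E1 E2 g)"
  unfolding iface_int_def by (rule sum.cong[OF refl]) (auto simp: facet_integral_piece[OF _ assms])

lemma facet_sum1_piece_sum:
  assumes g: "piecewise_continuous pieces g"
  shows "(\<Sum>E\<in>iface_facets C1 \<Gamma>. c E * facet_integral E g)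
           = (\<Sum>(E1, E2)\<in>pieces. c E1 * piece_integral E1 E2 g)"
proof -
  have "(\<Sum>E\<in>iface_facets C1 \<Gamma>. c E * facet_integral E g)
      = (\<Sum>E\<in>iface_facets C1 \<Gamma>. \<Sum>(E1, E2)\<in>{pr \<in> pieces. fst pr = E}. c E1 * piece_integral E1 E2 g)"
  proof (rule sum.cong[OF refl])
    fix E assume E: "E \<in> iface_facets C1 \<Gamma>"
    show "c E * facet_integral E g
        = (\<Sum>(E1, E2)\<in>{pr \<in> pieces. fst pr = E}. c E1 * piece_integral E1 E2 g)"
      unfolding facet_integral_iface_facet1[OF E g] sum_distrib_left by (rule sum.cong) auto
  qed
  also have "\<dots> = (\<Sum>(E1, E2)\<in>pieces. c E1 * piece_integral E1 E2 g)"
    by (rule sum.group[OF finite_pieces finite_iface_facets1]) (auto simp: inter_mesh_def)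
  finally show ?thesis .
qed

lemma facet_sum2_piece_sum:
  assumes g: "piecewise_continuous pieces g"
  shows "(\<Sum>E\<in>iface_facets C2 \<Gamma>. c E * facet_integral E g)
           = (\<Sum>(E1, E2)\<in>pieces. c E2 * piece_integral E1 E2 g)"
proof -
  have "(\<Sum>E\<in>iface_facets C2 \<Gamma>. c E * facet_integral E g)
      = (\<Sum>E\<in>iface_facets C2 \<Gamma>. \<Sum>(E1, E2)\<in>{pr \<in> pieces. snd pr = E}. c E2 * piece_integral E1 E2 g)"
  proof (rule sum.cong[OF refl])
    fix E assume E: "E \<in> iface_facets C2 \<Gamma>"
    show "c E * facet_integral E g
        = (\<Sum>(E1, E2)\<in>{pr \<in> pieces. snd pr = E}. c E2 * piece_integral E1 E2 g)"
      unfolding facet_integral_iface_facet2[OF E g] sum_distrib_left by (rule sum.cong) auto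
  qed
  also have "\<dots> = (\<Sum>(E1, E2)\<in>pieces. c E2 * piece_integral E1 E2 g)"
    by (rule sum.group[OF finite_pieces finite_iface_facets2]) (auto simp: inter_mesh_def)
  finally show ?thesis .
qed

lemma piece_sum_concentrated:
  assumes EE: "(E1, E2) \<in> pieces"
    and vanish: "\<And>E1' E2' y. (E1', E2') \<in> pieces \<Longrightarrow> (E1', E2') \<noteq> (E1, E2) \<Longrightarrow>
                   y \<in> rel_interior (E1' \<inter> E2') \<Longrightarrow> F E1' E2' y = 0"
  shows "(\<Sum>(E1', E2')\<in>pieces. piece_integral E1' E2' (F E1' E2')) = piece_integral E1 E2 (F E1 E2)"
proof -
  have "piece_integral E1' E2' (F E1' E2') = 0"
    if "(E1', E2') \<in> pieces" "(E1', E2') \<noteq> (E1, E2)" for E1' E2'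
  proof -
    have "piece_integral E1' E2' (F E1' E2') = piece_integral E1' E2' (\<lambda>y. 0)"
      by (rule piece_integral_cong) (rule vanish[OF that])
    then show ?thesis by (simp add: piece_integral_def)
  qed
  then show ?thesis
    by (subst sum.mono_neutral_right[OF finite_pieces, of "{(E1, E2)}"]) (use EE in auto)
qed

lemma Bh_form_piece_sum:
  assumes u1: "u1 \<in> Vh p C1 \<Gamma>" and v1: "v1 \<in> Vh p C1 \<Gamma>"
    and u2: "u2 \<in> Vh p C2 \<Gamma>" and v2: "v2 \<in> Vh p C2 \<Gamma>"
    and \<xi>: "piecewise_continuous pieces \<xi>" and \<mu>: "piecewise_continuous pieces \<mu>"
  shows "Bh_form \<alpha> n C1 C2 \<Gamma> k1 k2 u1 u2 \<xi> v1 v2 \<mu> =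
      k1 * integral (mesh_domain C1) (\<lambda>x. grad u1 x \<bullet> grad v1 x)
    + k2 * integral (mesh_domain C2) (\<lambda>x. grad u2 x \<bullet> grad v2 x)
    - (\<Sum>(E1, E2)\<in>pieces. piece_integral E1 E2 (\<lambda>x.
          (u1 x - u2 x) * \<mu> x + (v1 x - v2 x) * \<xi> x
        + \<alpha> * (diameter E1 / k1 * ((\<xi> x - k1 * nderiv1 n u1 x) * (\<mu> x - k1 * nderiv1 n v1 x))
             + diameter E2 / k2 * ((\<xi> x - k2 * nderiv2 n u2 x) * (\<mu> x - k2 * nderiv2 n v2 x)))))"
proof -
  note pc = Vh1_piecewise_continuous[OF u1] Vh1_piecewise_continuous[OF v1]
    Vh2_piecewise_continuous[OF u2] Vh2_piecewise_continuous[OF v2] \<xi> \<mu>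
  define gA where "gA = (\<lambda>x. (u1 x - u2 x) * \<mu> x)"
  define gB where "gB = (\<lambda>x. (v1 x - v2 x) * \<xi> x)"
  define gS1 where "gS1 = (\<lambda>x. (\<xi> x - k1 * nderiv1 n u1 x) * (\<mu> x - k1 * nderiv1 n v1 x))"
  define gS2 where "gS2 = (\<lambda>x. (\<xi> x - k2 * nderiv2 n u2 x) * (\<mu> x - k2 * nderiv2 n v2 x))"
  have pcg: "piecewise_continuous pieces gA" "piecewise_continuous pieces gB"
    "piecewise_continuous pieces gS1" "piecewise_continuous pieces gS2"
    unfolding gA_def gB_def gS1_def gS2_def by (intro piecewise_continuous_intros pc)+
  have "Bh_form \<alpha> n C1 C2 \<Gamma> k1 k2 u1 u2 \<xi> v1 v2 \<mu> =
      k1 * integral (mesh_domain C1) (\<lambda>x. grad u1 x \<bullet> grad v1 x)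
    + k2 * integral (mesh_domain C2) (\<lambda>x. grad u2 x \<bullet> grad v2 x)
    - iface_int (iface_facets C1 \<Gamma>) (iface_facets C2 \<Gamma>) gA
    - iface_int (iface_facets C1 \<Gamma>) (iface_facets C2 \<Gamma>) gB
    - \<alpha> * ((\<Sum>E\<in>iface_facets C1 \<Gamma>. diameter E / k1 * facet_integral E gS1)
          + (\<Sum>E\<in>iface_facets C2 \<Gamma>. diameter E / k2 * facet_integral E gS2))"
    unfolding Bh_form_def Bform_def Sform_def gA_def gB_def gS1_def gS2_def ..
  also have "\<dots> = k1 * integral (mesh_domain C1) (\<lambda>x. grad u1 x \<bullet> grad v1 x)
    + k2 * integral (mesh_domain C2) (\<lambda>x. grad u2 x \<bullet> grad v2 x)
    - (\<Sum>(E1, E2)\<in>pieces. piece_integral E1 E2 gA + piece_integral E1 E2 gB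
        + \<alpha> * (diameter E1 / k1 * piece_integral E1 E2 gS1 + diameter E2 / k2 * piece_integral E1 E2 gS2))"
    unfolding iface_int_piece_sum[OF pcg(1)] iface_int_piece_sum[OF pcg(2)]
      facet_sum1_piece_sum[OF pcg(3)] facet_sum2_piece_sum[OF pcg(4)]
    by (simp add: split_def sum.distrib sum_distrib_left distrib_left)
  also have "(\<Sum>(E1, E2)\<in>pieces. piece_integral E1 E2 gA + piece_integral E1 E2 gB
        + \<alpha> * (diameter E1 / k1 * piece_integral E1 E2 gS1 + diameter E2 / k2 * piece_integral E1 E2 gS2))
      = (\<Sum>(E1, E2)\<in>pieces. piece_integral E1 E2
          (\<lambda>x. gA x + gB x + \<alpha> * (diameter E1 / k1 * gS1 x + diameter E2 / k2 * gS2 x)))"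
    by (rule sum.cong[OF refl])
       (auto simp del: times_divide_eq_left
         simp add: pcg piece_integral_add piece_integral_cmult piecewise_continuous_intros)
  finally show ?thesis by (simp add: gA_def gB_def gS1_def gS2_def)
qed

lemma bh_form_piece_sum:
  assumes u1: "u1 \<in> Vh p C1 \<Gamma>" and v1: "v1 \<in> Vh p C1 \<Gamma>"
    and u2: "u2 \<in> Vh p C2 \<Gamma>" and v2: "v2 \<in> Vh p C2 \<Gamma>"
  shows "bh_form \<alpha> n C1 C2 \<Gamma> k1 k2 u1 u2 v1 v2 =
    (\<Sum>(E1, E2)\<in>pieces. piece_integral E1 E2 (\<lambda>x.
        beta_w \<alpha> k1 k2 (diameter E1) (diameter E2) * (u1 x - u2 x) * (v1 x - v2 x)
      - gamma_w \<alpha> k1 k2 (diameter E1) (diameter E2) * flux_jump n k1 k2 u1 u2 x * flux_jump n k1 k2 v1 v2 x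
      - flux_avg n k1 k2 (diameter E1) (diameter E2) u1 u2 x * (v1 x - v2 x)
      - (u1 x - u2 x) * flux_avg n k1 k2 (diameter E1) (diameter E2) v1 v2 x))"
  unfolding bh_form_def
proof (rule sum.cong[OF refl], clarify)
  fix E1 E2 assume EE: "(E1, E2) \<in> pieces"
  note pc = Vh1_piecewise_continuous[OF u1] Vh1_piecewise_continuous[OF v1]
    Vh2_piecewise_continuous[OF u2] Vh2_piecewise_continuous[OF v2]
  note pcf = piecewise_continuous_flux_avg[OF pc(2) pc(6)] piecewise_continuous_flux_avg[OF pc(4) pc(8)]
    piecewise_continuous_flux_jump[OF pc(2) pc(6)] piecewise_continuous_flux_jump[OF pc(4) pc(8)]
  show "(let h1 = diameter E1; h2 = diameter E2; E = E1 \<inter> E2 in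
          facet_integral E (\<lambda>x. beta_w \<alpha> k1 k2 h1 h2 * (u1 x - u2 x) * (v1 x - v2 x))
        - facet_integral E (\<lambda>x. gamma_w \<alpha> k1 k2 h1 h2 * flux_jump n k1 k2 u1 u2 x * flux_jump n k1 k2 v1 v2 x)
        - facet_integral E (\<lambda>x. flux_avg n k1 k2 h1 h2 u1 u2 x * (v1 x - v2 x))
        - facet_integral E (\<lambda>x. (u1 x - u2 x) * flux_avg n k1 k2 h1 h2 v1 v2 x)) =
    piece_integral E1 E2 (\<lambda>x.
        beta_w \<alpha> k1 k2 (diameter E1) (diameter E2) * (u1 x - u2 x) * (v1 x - v2 x)
      - gamma_w \<alpha> k1 k2 (diameter E1) (diameter E2) * flux_jump n k1 k2 u1 u2 x * flux_jump n k1 k2 v1 v2 x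
      - flux_avg n k1 k2 (diameter E1) (diameter E2) u1 u2 x * (v1 x - v2 x)
      - (u1 x - u2 x) * flux_avg n k1 k2 (diameter E1) (diameter E2) v1 v2 x)"
    unfolding Let_def using EE
    by (simp add: facet_integral_piece piece_integral_diff piecewise_continuous_intros pc pcf)
qed

section \<open>The multiplier and the consistency of the method\<close>

lemma flux_residual_poly_on_piece:
  assumes EE: "(E1, E2) \<in> pieces"
    and u1: "u1 \<in> Vh p C1 \<Gamma>" and u2: "u2 \<in> Vh p C2 \<Gamma>"
    and lam: "lam \<in> Qh p (iface_facets C1 \<Gamma>) (iface_facets C2 \<Gamma>)"
  shows "\<exists>q. poly_fun p q \<and> (\<forall>y\<in>rel_interior (E1 \<inter> E2).
           lam y - (flux_avg n k1 k2 h1 h2 u1 u2 y - beta_w \<alpha> k1 k2 h1 h2 * (u1 y - u2 y)) = q y)"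
proof -
  obtain ql where ql: "poly_fun p ql" "\<forall>y\<in>rel_interior (E1 \<inter> E2). lam y = ql y"
    using lam EE unfolding Qh_def by fast
  obtain q1 r1 where qr1: "poly_fun p q1" "poly_fun p r1"
    "\<forall>y\<in>rel_interior (E1 \<inter> E2). u1 y = q1 y \<and> nderiv1 n u1 y = r1 y"
    using Vh1_poly_on_piece[OF EE u1] by blast
  obtain q2 r2 where qr2: "poly_fun p q2" "poly_fun p r2"
    "\<forall>y\<in>rel_interior (E1 \<inter> E2). u2 y = q2 y \<and> nderiv2 n u2 y = r2 y"
    using Vh2_poly_on_piece[OF EE u2] by blast
  show ?thesis
  proof (intro exI conjI ballI)
    show "poly_fun p (\<lambda>y. ql y - (k2 * h1 / (k2 * h1 + k1 * h2) * (k1 * r1 y)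
        + k1 * h2 / (k2 * h1 + k1 * h2) * (k2 * r2 y) - beta_w \<alpha> k1 k2 h1 h2 * (q1 y - q2 y)))"
      by (intro poly_fun_diff poly_fun_add poly_fun_scale ql(1) qr1(1,2) qr2(1,2))
    show "lam y - (flux_avg n k1 k2 h1 h2 u1 u2 y - beta_w \<alpha> k1 k2 h1 h2 * (u1 y - u2 y))
        = ql y - (k2 * h1 / (k2 * h1 + k1 * h2) * (k1 * r1 y)
        + k1 * h2 / (k2 * h1 + k1 * h2) * (k2 * r2 y) - beta_w \<alpha> k1 k2 h1 h2 * (q1 y - q2 y))"
      if "y \<in> rel_interior (E1 \<inter> E2)" for y
      using that ql(2) qr1(3) qr2(3) by (simp add: flux_avg_def)
  qed
qed

lemma multiplier_flux_formula:
  assumes k: "k1 \<ge> k2" "k2 > 0" and alpha: "\<alpha> > 0"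
    and u1: "u1 \<in> Vh p C1 \<Gamma>" and u2: "u2 \<in> Vh p C2 \<Gamma>"
    and lam: "lam \<in> Qh p (iface_facets C1 \<Gamma>) (iface_facets C2 \<Gamma>)"
    and disc: "\<forall>\<mu>\<in>Qh p (iface_facets C1 \<Gamma>) (iface_facets C2 \<Gamma>).
                 Bh_form \<alpha> n C1 C2 \<Gamma> k1 k2 u1 u2 lam (\<lambda>x. 0) (\<lambda>x. 0) \<mu> = 0"
    and EE: "(E1, E2) \<in> pieces" and x: "x \<in> rel_interior (E1 \<inter> E2)"
  shows "lam x = flux_avg n k1 k2 (diameter E1) (diameter E2) u1 u2 x
                 - beta_w \<alpha> k1 k2 (diameter E1) (diameter E2) * (u1 x - u2 x)"
proof -
  define P where "P = rel_interior (E1 \<inter> E2)"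
  define h1 where "h1 = diameter E1"
  define h2 where "h2 = diameter E2"
  define G where "G = (\<lambda>y. lam y - (flux_avg n k1 k2 h1 h2 u1 u2 y - beta_w \<alpha> k1 k2 h1 h2 * (u1 y - u2 y)))"
  \<comment> \<open>the residual, used as a test function supported on this one piece\<close>
  define \<mu> where "\<mu> = (\<lambda>y. if y \<in> P then G y else 0)"
  obtain q where q: "poly_fun p q" "\<forall>y\<in>P. G y = q y"
    using flux_residual_poly_on_piece[OF EE u1 u2 lam] unfolding G_def P_def by blast
  have \<mu>: "\<mu> \<in> Qh p (iface_facets C1 \<Gamma>) (iface_facets C2 \<Gamma>)"
    unfolding \<mu>_def P_def by (rule Qh_restrict_to_piece[OF EE q[unfolded P_def]])
  have h: "h1 > 0" "h2 > 0" unfolding h1_def h2_def by (rule piece_diameters_pos[OF EE])+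
  define c where "c = \<alpha> * (h1 / k1 + h2 / k2)"
  have "h1 / k1 > 0" "h2 / k2 > 0" using h k by simp_all
  then have c: "c \<noteq> 0" using alpha by (simp add: c_def)
  have "0 < k2 * h1 + k1 * h2" using h k by (intro add_pos_pos mult_pos_pos) auto
  then have "k2 * h1 + k1 * h2 \<noteq> 0" by simp
  moreover have "\<alpha> \<noteq> 0" "k1 \<noteq> 0" "k2 \<noteq> 0" using alpha k by auto
  ultimately have residual: "(u1 y - u2 y)
      + \<alpha> * (h1 / k1 * (lam y - k1 * nderiv1 n u1 y) + h2 / k2 * (lam y - k2 * nderiv2 n u2 y))
      = c * G y" for y
    unfolding c_def G_def flux_avg_def beta_w_def by (intro flux_residual_identity nitsche_weight_relations)
  have "0 = Bh_form \<alpha> n C1 C2 \<Gamma> k1 k2 u1 u2 lam (\<lambda>x. 0) (\<lambda>x. 0) \<mu>" using disc \<mu> by simp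
  also have "\<dots> = - (\<Sum>(E1', E2')\<in>pieces. piece_integral E1' E2' (\<lambda>y. (u1 y - u2 y) * \<mu> y
      + \<alpha> * (diameter E1' / k1 * ((lam y - k1 * nderiv1 n u1 y) * \<mu> y)
           + diameter E2' / k2 * ((lam y - k2 * nderiv2 n u2 y) * \<mu> y))))"
    using Bh_form_piece_sum[OF u1 Vh_zero u2 Vh_zero Qh_piecewise_continuous[OF lam]
        Qh_piecewise_continuous[OF \<mu>], of \<alpha> k1 k2]
    by (simp add: grad_zero nderiv_zero)
  also have "\<dots> = - piece_integral E1 E2 (\<lambda>y. (u1 y - u2 y) * \<mu> y
      + \<alpha> * (h1 / k1 * ((lam y - k1 * nderiv1 n u1 y) * \<mu> y) + h2 / k2 * ((lam y - k2 * nderiv2 n u2 y) * \<mu> y)))"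
    using pieces_rel_interiors_disjoint[OF EE]
    by (subst piece_sum_concentrated[OF EE]) (auto simp: \<mu>_def P_def h1_def h2_def)
  also have "\<dots> = - piece_integral E1 E2 (\<lambda>y. c * (q y * q y))"
  proof (intro arg_cong[where f = uminus] piece_integral_cong)
    fix y assume "y \<in> rel_interior (E1 \<inter> E2)"
    then have \<mu>q: "\<mu> y = q y" and Gq: "G y = q y" using q(2) by (simp_all add: \<mu>_def P_def)
    have "(u1 y - u2 y) * \<mu> y + \<alpha> * (h1 / k1 * ((lam y - k1 * nderiv1 n u1 y) * \<mu> y)
        + h2 / k2 * ((lam y - k2 * nderiv2 n u2 y) * \<mu> y))
      = ((u1 y - u2 y) + \<alpha> * (h1 / k1 * (lam y - k1 * nderiv1 n u1 y)
        + h2 / k2 * (lam y - k2 * nderiv2 n u2 y))) * \<mu> y"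
      by (simp add: algebra_simps)
    also have "\<dots> = c * (q y * q y)" unfolding residual \<mu>q Gq by simp
    finally show "(u1 y - u2 y) * \<mu> y + \<alpha> * (h1 / k1 * ((lam y - k1 * nderiv1 n u1 y) * \<mu> y)
        + h2 / k2 * ((lam y - k2 * nderiv2 n u2 y) * \<mu> y)) = c * (q y * q y)" .
  qed
  finally have "piece_integral E1 E2 (\<lambda>y. q y * q y) = 0" using c by (simp add: piece_integral_cmult)
  then have "q x = 0"
    by (rule piece_integral_square_eq_0[OF EE poly_fun_continuous_on[OF q(1)] _ x])
  then have "G x = 0" using q(2) x by (simp add: P_def)
  then show ?thesis by (simp add: G_def h1_def h2_def)
qed

lemma piece_consistency:
  assumes k: "k1 \<ge> k2" "k2 > 0" and alpha: "\<alpha> > 0" and EE: "(E1, E2) \<in> pieces"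
    and flux: "\<forall>x\<in>rel_interior (E1 \<inter> E2).
                 lam x = flux_avg n k1 k2 (diameter E1) (diameter E2) u1 u2 x
                         - beta_w \<alpha> k1 k2 (diameter E1) (diameter E2) * (u1 x - u2 x)"
  shows "piece_integral E1 E2 (\<lambda>x.
        beta_w \<alpha> k1 k2 (diameter E1) (diameter E2) * (u1 x - u2 x) * (v1 x - v2 x)
      - gamma_w \<alpha> k1 k2 (diameter E1) (diameter E2) * flux_jump n k1 k2 u1 u2 x * flux_jump n k1 k2 v1 v2 x
      - flux_avg n k1 k2 (diameter E1) (diameter E2) u1 u2 x * (v1 x - v2 x)
      - (u1 x - u2 x) * flux_avg n k1 k2 (diameter E1) (diameter E2) v1 v2 x)
       = - piece_integral E1 E2 (\<lambda>x. (u1 x - u2 x) * 0 + (v1 x - v2 x) * lam x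
        + \<alpha> * (diameter E1 / k1 * ((lam x - k1 * nderiv1 n u1 x) * (0 - k1 * nderiv1 n v1 x))
             + diameter E2 / k2 * ((lam x - k2 * nderiv2 n u2 x) * (0 - k2 * nderiv2 n v2 x))))"
    (is "piece_integral _ _ ?f = - piece_integral _ _ ?g")
proof -
  have "0 < k2 * diameter E1 + k1 * diameter E2"
    using piece_diameters_pos[OF EE] k by (intro add_pos_pos mult_pos_pos) auto
  then have S: "k2 * diameter E1 + k1 * diameter E2 \<noteq> 0" by simp
  have nz: "\<alpha> \<noteq> 0" "k1 \<noteq> 0" "k2 \<noteq> 0" using alpha k by auto
  note identity = consistency_identity[OF nitsche_weight_relations[OF nz S]]
  have "piece_integral E1 E2 ?f = piece_integral E1 E2 (\<lambda>x. (-1) * ?g x)"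
  proof (rule piece_integral_cong)
    fix y assume "y \<in> rel_interior (E1 \<inter> E2)"
    then have lam_y: "lam y = flux_avg n k1 k2 (diameter E1) (diameter E2) u1 u2 y
                        - beta_w \<alpha> k1 k2 (diameter E1) (diameter E2) * (u1 y - u2 y)"
      using flux by blast
    have "?f y = - ((v1 y - v2 y) * lam y
        + \<alpha> * (diameter E1 / k1 * ((lam y - k1 * nderiv1 n u1 y) * (0 - k1 * nderiv1 n v1 y))
             + diameter E2 / k2 * ((lam y - k2 * nderiv2 n u2 y) * (0 - k2 * nderiv2 n v2 y))))"
      unfolding lam_y flux_avg_def flux_jump_def beta_w_def gamma_w_def by (rule identity)
    then show "?f y = (-1) * ?g y" by simp
  qed
  then show ?thesis unfolding piece_integral_cmult by simp
qed

lemma ah_form_eq_Bh_form: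
  assumes k: "k1 \<ge> k2" "k2 > 0" and alpha: "\<alpha> > 0"
    and u1: "u1 \<in> Vh p C1 \<Gamma>" and u2: "u2 \<in> Vh p C2 \<Gamma>"
    and v1: "v1 \<in> Vh p C1 \<Gamma>" and v2: "v2 \<in> Vh p C2 \<Gamma>"
    and lam: "lam \<in> Qh p (iface_facets C1 \<Gamma>) (iface_facets C2 \<Gamma>)"
    and flux: "\<forall>(E1, E2)\<in>pieces. \<forall>x\<in>rel_interior (E1 \<inter> E2).
                 lam x = flux_avg n k1 k2 (diameter E1) (diameter E2) u1 u2 x
                         - beta_w \<alpha> k1 k2 (diameter E1) (diameter E2) * (u1 x - u2 x)"
  shows "ah_form \<alpha> n C1 C2 \<Gamma> k1 k2 u1 u2 v1 v2 = Bh_form \<alpha> n C1 C2 \<Gamma> k1 k2 u1 u2 lam v1 v2 (\<lambda>x. 0)"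
proof -
  have "(\<Sum>(E1, E2)\<in>pieces. piece_integral E1 E2 (\<lambda>x.
        beta_w \<alpha> k1 k2 (diameter E1) (diameter E2) * (u1 x - u2 x) * (v1 x - v2 x)
      - gamma_w \<alpha> k1 k2 (diameter E1) (diameter E2) * flux_jump n k1 k2 u1 u2 x * flux_jump n k1 k2 v1 v2 x
      - flux_avg n k1 k2 (diameter E1) (diameter E2) u1 u2 x * (v1 x - v2 x)
      - (u1 x - u2 x) * flux_avg n k1 k2 (diameter E1) (diameter E2) v1 v2 x))
      = (\<Sum>(E1, E2)\<in>pieces. - piece_integral E1 E2 (\<lambda>x. (u1 x - u2 x) * 0 + (v1 x - v2 x) * lam x
        + \<alpha> * (diameter E1 / k1 * ((lam x - k1 * nderiv1 n u1 x) * (0 - k1 * nderiv1 n v1 x))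
             + diameter E2 / k2 * ((lam x - k2 * nderiv2 n u2 x) * (0 - k2 * nderiv2 n v2 x)))))"
    by (rule sum.cong) (use flux piece_consistency[OF k alpha] in auto)
  then show ?thesis
    unfolding ah_form_def bh_form_piece_sum[OF u1 v1 u2 v2]
      Bh_form_piece_sum[OF u1 v1 u2 v2 Qh_piecewise_continuous[OF lam] piecewise_continuous_const]
    by (simp add: sum_negf split_def)
qed

end

theorem mainTheorem6:
  fixes C1 C2 :: "('d::finite pt) set set"
    and \<Gamma> :: "'d pt set"
    and n :: "'d pt \<Rightarrow> 'd pt"
    and f u1 u2 lam :: "'d pt \<Rightarrow> real"
    and k1 k2 \<alpha> :: real and p :: nat
  assumes dim: "CARD('d) = 2 \<or> CARD('d) = 3"
    and mesh1: "conforming_mesh C1" and mesh2: "conforming_mesh C2"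
    and disj: "mesh_domain C1 \<inter> mesh_domain C2 = {}"
    and Gamma_def: "\<Gamma> = frontier (mesh_domain C1) \<inter> frontier (mesh_domain C2)"
    and cover1: "\<Union>(iface_facets C1 \<Gamma>) = \<Gamma>"
    and cover2: "\<Union>(iface_facets C2 \<Gamma>) = \<Gamma>"
    and normal: "is_iface_normal C1 C2 \<Gamma> n"
    and k: "k1 \<ge> k2" "k2 > 0"
    and f_L2: "f measurable_on interior (\<Union>C1 \<union> \<Union>C2)"
              "(\<lambda>x. (f x)\<^sup>2) integrable_on interior (\<Union>C1 \<union> \<Union>C2)"
    and p: "p \<ge> 1"
    and alpha: "\<alpha> > 0"
    and u1: "u1 \<in> Vh p C1 \<Gamma>" and u2: "u2 \<in> Vh p C2 \<Gamma>"
    and lam: "lam \<in> Qh p (iface_facets C1 \<Gamma>) (iface_facets C2 \<Gamma>)"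
    and disc: "\<forall>v1\<in>Vh p C1 \<Gamma>. \<forall>v2\<in>Vh p C2 \<Gamma>.
                 \<forall>\<mu>\<in>Qh p (iface_facets C1 \<Gamma>) (iface_facets C2 \<Gamma>).
                   Bh_form \<alpha> n C1 C2 \<Gamma> k1 k2 u1 u2 lam v1 v2 \<mu> = Lform C1 C2 f v1 v2"
  shows "(\<forall>(E1, E2)\<in>inter_mesh (iface_facets C1 \<Gamma>) (iface_facets C2 \<Gamma>).
            \<forall>x\<in>rel_interior (E1 \<inter> E2).
              lam x = flux_avg n k1 k2 (diameter E1) (diameter E2) u1 u2 x
                      - beta_w \<alpha> k1 k2 (diameter E1) (diameter E2) * (u1 x - u2 x))
       \<and> (\<forall>v1\<in>Vh p C1 \<Gamma>. \<forall>v2\<in>Vh p C2 \<Gamma>.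
            ah_form \<alpha> n C1 C2 \<Gamma> k1 k2 u1 u2 v1 v2 = Lform C1 C2 f v1 v2)"
proof -
  interpret interface_meshes C1 C2 \<Gamma> n
    by unfold_locales (use dim mesh1 mesh2 disj cover1 cover2 normal in auto)
  have "\<forall>\<mu>\<in>Qh p (iface_facets C1 \<Gamma>) (iface_facets C2 \<Gamma>).
      Bh_form \<alpha> n C1 C2 \<Gamma> k1 k2 u1 u2 lam (\<lambda>x. 0) (\<lambda>x. 0) \<mu> = 0"
    using disc Vh_zero[of p C1 \<Gamma>] Vh_zero[of p C2 \<Gamma>] by (simp add: Lform_def)
  then have flux: "\<forall>(E1, E2)\<in>pieces. \<forall>x\<in>rel_interior (E1 \<inter> E2).
      lam x = flux_avg n k1 k2 (diameter E1) (diameter E2) u1 u2 x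
              - beta_w \<alpha> k1 k2 (diameter E1) (diameter E2) * (u1 x - u2 x)"
    using multiplier_flux_formula[OF k alpha u1 u2 lam] by blast
  moreover have "ah_form \<alpha> n C1 C2 \<Gamma> k1 k2 u1 u2 v1 v2 = Lform C1 C2 f v1 v2"
    if "v1 \<in> Vh p C1 \<Gamma>" "v2 \<in> Vh p C2 \<Gamma>" for v1 v2
  proof -
    have "Bh_form \<alpha> n C1 C2 \<Gamma> k1 k2 u1 u2 lam v1 v2 (\<lambda>x. 0) = Lform C1 C2 f v1 v2"
      using disc that Qh_zero by blast
    then show ?thesis using ah_form_eq_Bh_form[OF k alpha u1 u2 that lam flux] by simp
  qed
  ultimately show ?thesis by blast
qed

end
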